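(* Let $n\ge1$, let $\mathcal{S}_n$ be the Shi arrangement in $\mathbb{R}^n$ (hyperplanes $x_i-x_j=0$ and $x_i-x_j=1$ for $1\le i<j\le n$), let $\mathbb{Z}_{n+1}$ be the integers modulo $n+1$ and $H$ the cyclic subgroup of $\mathbb{Z}_{n+1}^n$ generated by $(1,\ldots,1)$. Then the map sending a region $R$ of $\mathcal{S}_n$ to the coset $(f(1),\ldots,f(n)) + H$, where $f=\sigma_n(R)$ and the values $f(i)\in[n]$ are read modulo $n+1$, is a bijection between the regions of $\mathcal{S}_n$ and $\mathbb{Z}_{n+1}^n/H$. In particular $\mathcal{S}_n$ has $(n+1)^{n-1}$ regions.
   Context: A region of an arrangement is a connected component of the complement of the union of its hyperplanes. The map $\sigma_n$ is defined as follows. For a region $R$ of $\mathcal{S}_n$, let $w=w_1\cdots w_n$ be the unique permutation of $[n]$ with $x_{w_1}>\cdots>x_{w_n}$ on $R$; the position of $m$ is the index $p$ with $w_p=m$. For each pair $i<j$ with $x_i-x_j>1$ on $R$ draw an arc from $i$ to $j$; then remove every arc $(i,l)$ for which there is a different arc $(j,k)$ with $i$ weakly left of $j$ and $k$ weakly left of $l$ in $w$. The remaining arcs partition $[n]$ into chains (connected components). Then $\sigma_n(R)=f$ with $f(i)$ equal to the position in $w$ of the leftmost element of the chain containing $i$. *)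

theory Defs
  imports "HOL-Analysis.Analysis"
begin

text \<open>Points of R^n are functions nat => real supported on {1..n}
  (subspace of the product topology, homeomorphic to Euclidean R^n).\<close>

definition shi_space :: "nat \<Rightarrow> (nat \<Rightarrow> real) set" where
  "shi_space n = {x. \<forall>i. i \<notin> {1..n} \<longrightarrow> x i = 0}"

definition shi_complement :: "nat \<Rightarrow> (nat \<Rightarrow> real) set" where
  "shi_complement n = {x \<in> shi_space n. \<forall>i j. 1 \<le> i \<longrightarrow> i < j \<longrightarrow> j \<le> n \<longrightarrow>
      x i - x j \<noteq> 0 \<and> x i - x j \<noteq> 1}"

definition shi_regions :: "nat \<Rightarrow> (nat \<Rightarrow> real) set set" where
  "shi_regions n = {connected_component_set (shi_complement n) x | x. x \<in> shi_complement n}"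

definition shi_perm :: "nat \<Rightarrow> (nat \<Rightarrow> real) set \<Rightarrow> nat \<Rightarrow> nat" where
  "shi_perm n R = (THE w. bij_betw w {1..n} {1..n} \<and> (\<forall>p. p \<notin> {1..n} \<longrightarrow> w p = 0) \<and>
      (\<forall>x\<in>R. \<forall>p q. 1 \<le> p \<longrightarrow> p < q \<longrightarrow> q \<le> n \<longrightarrow> x (w p) > x (w q)))"

definition shi_pos :: "nat \<Rightarrow> (nat \<Rightarrow> real) set \<Rightarrow> nat \<Rightarrow> nat" where
  "shi_pos n R m = (THE p. p \<in> {1..n} \<and> shi_perm n R p = m)"

definition shi_arcs :: "nat \<Rightarrow> (nat \<Rightarrow> real) set \<Rightarrow> (nat \<times> nat) set" where
  "shi_arcs n R = {(i, j). 1 \<le> i \<and> i < j \<and> j \<le> n \<and> (\<forall>x\<in>R. x i - x j > 1)}"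

definition shi_kept :: "nat \<Rightarrow> (nat \<Rightarrow> real) set \<Rightarrow> (nat \<times> nat) set" where
  "shi_kept n R = {(i, l) \<in> shi_arcs n R. \<not> (\<exists>(j, k) \<in> shi_arcs n R. (j, k) \<noteq> (i, l) \<and>
      shi_pos n R i \<le> shi_pos n R j \<and> shi_pos n R k \<le> shi_pos n R l)}"

definition shi_chain :: "nat \<Rightarrow> (nat \<Rightarrow> real) set \<Rightarrow> nat \<Rightarrow> nat set" where
  "shi_chain n R i = {m \<in> {1..n}. (i, m) \<in> (shi_kept n R \<union> (shi_kept n R)\<inverse>)\<^sup>*}"

definition shi_sigma :: "nat \<Rightarrow> (nat \<Rightarrow> real) set \<Rightarrow> nat \<Rightarrow> nat" where
  "shi_sigma n R i = (if i \<in> {1..n} then Min (shi_pos n R ` shi_chain n R i) else 0)"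

text \<open>Z_{n+1}^n as functions {1..n} -> {0..n} (0 outside), and the congruence modulo
  the cyclic subgroup H generated by (1,...,1).\<close>
definition zvec :: "nat \<Rightarrow> (nat \<Rightarrow> nat) set" where
  "zvec n = {v. (\<forall>i\<in>{1..n}. v i \<le> n) \<and> (\<forall>i. i \<notin> {1..n} \<longrightarrow> v i = 0)}"

definition zrel :: "nat \<Rightarrow> ((nat \<Rightarrow> nat) \<times> (nat \<Rightarrow> nat)) set" where
  "zrel n = {(u, v). u \<in> zvec n \<and> v \<in> zvec n \<and>
      (\<exists>c::nat. \<forall>i\<in>{1..n}. v i = (u i + c) mod (n + 1))}"

definition shi_coset :: "nat \<Rightarrow> (nat \<Rightarrow> real) set \<Rightarrow> (nat \<Rightarrow> nat) set" where
  "shi_coset n R = zrel n `` {(\<lambda>i. if i \<in> {1..n} then shi_sigma n R i mod (n + 1) else 0)}"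

end

theory Submission
  imports Defs
begin

(* Regions of the Shi arrangement are the classes of points with the same order of the
   coordinates and the same arcs {(i, j). x_i - x_j > 1}: each class is convex, and the
   hyperplanes separate different classes.  Read in positions of w, the arcs kept by sigma_n
   form a non-nesting matching whose chains partition the positions, and sigma_n(R) sends i to
   the start of the chain through the position of i; hence it is a parking function.
   The multiplicities of the chain starts determine the matching; labels increase along each
   chain, which pins down w; and the arcs of R are exactly those enclosing a kept arc.  So
   sigma_n is injective.  Conversely, a non-nesting matching with prescribed start
   multiplicities is built greedily from the left and realised by points whose gaps exceed 1
   exactly beyond prescribed thresholds, so sigma_n is onto the parking functions.  Finally,
   by Pollak's cycle lemma every coset of H contains exactly one parking function: a shift of u
   is a parking function exactly when it starts counting at the cyclic minimum of the walk
   t |-> #{i. u_i mod (n + 1) < t} - t, which drops by 1 per period.  There are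
   (n + 1)^n / (n + 1) cosets. *)

section \<open>Parking functions and the cycle lemma\<close>

definition parking_function :: "nat \<Rightarrow> (nat \<Rightarrow> nat) \<Rightarrow> bool" where
  "parking_function n f \<longleftrightarrow> (\<forall>i\<in>{1..n}. 1 \<le> f i \<and> f i \<le> n) \<and> (\<forall>i. i \<notin> {1..n} \<longrightarrow> f i = 0) \<and>
     (\<forall>v\<in>{1..n}. v \<le> card {i\<in>{1..n}. f i \<le> v})"

definition zshift :: "nat \<Rightarrow> nat \<Rightarrow> (nat \<Rightarrow> nat) \<Rightarrow> nat \<Rightarrow> nat" where
  "zshift n c u = (\<lambda>i. if i \<in> {1..n} then (u i + c) mod (n + 1) else 0)"

definition window_min :: "(nat \<Rightarrow> int) \<Rightarrow> nat \<Rightarrow> nat \<Rightarrow> bool" where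
  "window_min F M s \<longleftrightarrow> (\<forall>k\<in>{1..<M}. F s \<le> F (s + k))"

context
  fixes F :: "nat \<Rightarrow> int" and M :: nat
  assumes drift: "\<And>t. F (t + M) = F t - 1"
begin

lemma window_min_exists:
  assumes "M \<ge> 1"
  shows "\<exists>s<M. window_min F M s"
proof -
  let ?m = "Min (F ` {..<M})"
  have ex: "\<exists>s. s < M \<and> F s = ?m"
    using Min_in[of "F ` {..<M}"] assms by fastforce
  define s where "s = (LEAST s. s < M \<and> F s = ?m)"
  have s: "s < M" "F s = ?m"
    using LeastI_ex[OF ex] unfolding s_def by auto
  have before_s: "F t \<noteq> ?m" if "t < s" for t
    using not_less_Least[of t "\<lambda>s. s < M \<and> F s = ?m"] that s unfolding s_def[symmetric] by auto
  have ge_min: "?m \<le> F t" if "t < M" for t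
    using that by simp
  have "F s \<le> F (s + k)" if k: "k \<in> {1..<M}" for k
  proof (cases "s + k < M")
    case True
    then show ?thesis using ge_min s by simp
  next
    case False
    \<comment> \<open>then \<open>s + k = t + M\<close> with \<open>t < s\<close>, and the drift makes \<open>F (s + k)\<close>
      one below \<open>F t > F s\<close>\<close>
    define t where "t = s + k - M"
    have t: "t < s" "s + k = t + M" using k False unfolding t_def by auto
    have "t < M" using t s by simp
    then have "?m < F t" using ge_min before_s[OF t(1)] by (simp add: order_less_le)
    then show ?thesis using t s drift[of t] by simp
  qed
  then show ?thesis using s unfolding window_min_def by blast
qed

lemma window_min_unique:
  assumes "s < M" "window_min F M s" "s' < M" "window_min F M s'"
  shows "s = s'"
proof -
  have False if "window_min F M a" "window_min F M b" "a < b" "b < M" for a b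
  proof -
    have "b - a \<in> {1..<M}" "M + a - b \<in> {1..<M}" using that by auto
    then have "F a \<le> F (a + (b - a))" "F b \<le> F (b + (M + a - b))"
      using that(1,2) unfolding window_min_def by blast+
    moreover have "b + (M + a - b) = a + M" using that by simp
    ultimately show False using drift[of a] that(3) by simp
  qed
  then show ?thesis using assms by (metis linorder_neqE_nat)
qed

lemma window_min_add_period: "window_min F M (s + q * M) \<longleftrightarrow> window_min F M s"
proof (induction q)
  case (Suc q)
  have step: "F (s + Suc q * M + k) = F (s + q * M + k) - 1" for k
    using drift[of "s + q * M + k"] by (simp add: algebra_simps)
  have "F (s + Suc q * M) \<le> F (s + Suc q * M + k) \<longleftrightarrow> F (s + q * M) \<le> F (s + q * M + k)" for k
  proof -
    have "F (s + Suc q * M) = F (s + q * M) - 1" using step[of 0] by simp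
    then show ?thesis using step[of k] by linarith
  qed
  then show ?case using Suc unfolding window_min_def by presburger
qed simp

lemma window_min_mod: "window_min F M s \<longleftrightarrow> window_min F M (s mod M)"
  using window_min_add_period[of "s mod M" "s div M"] by (simp add: mod_div_mult_eq)

end
definition residue_count :: "nat \<Rightarrow> (nat \<Rightarrow> nat) \<Rightarrow> nat \<Rightarrow> nat" where
  "residue_count n u j = card {i\<in>{1..n}. u i = j mod (n + 1)}"

definition excess :: "nat \<Rightarrow> (nat \<Rightarrow> nat) \<Rightarrow> nat \<Rightarrow> int" where
  "excess n u t = int (\<Sum>j<t. residue_count n u j) - int t"

lemma card_eq_sum_card_fibres:
  assumes "finite A" "finite B" "g ` A \<subseteq> B"
  shows "card A = (\<Sum>b\<in>B. card {a\<in>A. g a = b})"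
  using sum.group[OF assms, of "\<lambda>_. 1::nat"] by simp

lemma sum_periodic_window:
  fixes g :: "nat \<Rightarrow> 'a::comm_monoid_add"
  assumes period: "\<And>j. g (j + M) = g j"
  shows "(\<Sum>j\<in>{t..<t + M}. g j) = (\<Sum>j<M. g j)"
proof (induction t)
  case 0
  then show ?case by (simp add: atLeast0LessThan)
next
  case (Suc t)
  show ?case
  proof (cases "M = 0")
    case False
    have "(\<Sum>j\<in>{Suc t..<Suc t + M}. g j) = (\<Sum>j\<in>{Suc t..<t + M}. g j) + g (t + M)"
      using False by simp
    also have "\<dots> = g t + (\<Sum>j\<in>{Suc t..<t + M}. g j)"
      using period[of t] by (simp add: add.commute)
    also have "\<dots> = (\<Sum>j\<in>{t..<t + M}. g j)"
      using False by (simp add: sum.atLeast_Suc_lessThan)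
    finally show ?thesis using Suc.IH by simp
  qed simp
qed

lemma sum_residue_count_period:
  assumes "u \<in> zvec n"
  shows "(\<Sum>j\<in>{t..<t + (n + 1)}. residue_count n u j) = n"
proof -
  have "(\<Sum>j\<in>{t..<t + (n + 1)}. residue_count n u j) = (\<Sum>j<n + 1. residue_count n u j)"
    by (rule sum_periodic_window) (simp only: residue_count_def mod_add_self2)
  also have "\<dots> = (\<Sum>j<n + 1. card {i\<in>{1..n}. u i = j})"
    by (rule sum.cong) (simp_all add: residue_count_def)
  also have "\<dots> = card {1..n}"
    using card_eq_sum_card_fibres[of "{1..n}" "{..<n + 1}" u] assms by (force simp: zvec_def)
  finally show ?thesis by simp
qed

lemma excess_add:
  "excess n u (t + k) = excess n u t + int (\<Sum>j\<in>{t..<t + k}. residue_count n u j) - int k"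
proof -
  have "(\<Sum>j<t + k. residue_count n u j)
      = (\<Sum>j<t. residue_count n u j) + (\<Sum>j\<in>{t..<t + k}. residue_count n u j)"
    using sum.atLeastLessThan_concat[of 0 t "t + k" "residue_count n u"]
    by (simp add: atLeast0LessThan)
  then show ?thesis unfolding excess_def by simp
qed

lemma excess_period:
  assumes "u \<in> zvec n"
  shows "excess n u (t + (n + 1)) = excess n u t - 1"
  using excess_add[of n u t "n + 1", unfolded sum_residue_count_period[OF assms]] by simp

lemma mod_add_eq_iff:
  fixes a c j t M :: nat
  assumes "a < M" "j < M" "(t + c) mod M = 0"
  shows "(a + c) mod M = j \<longleftrightarrow> a = (j + t) mod M"
proof
  assume "(a + c) mod M = j"
  then have "(j + t) mod M = (a + (t + c)) mod M"
    by (metis mod_add_left_eq add.commute add.left_commute)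
  also have "\<dots> = a" using assms by (metis mod_add_right_eq add_0_right mod_less)
  finally show "a = (j + t) mod M" ..
next
  assume "a = (j + t) mod M"
  then have "(a + c) mod M = (j + (t + c)) mod M"
    by (simp add: mod_add_left_eq add.assoc)
  also have "\<dots> = j" using assms by (metis mod_add_right_eq add_0_right mod_less)
  finally show "(a + c) mod M = j" .
qed

lemma card_zshift_atMost:
  assumes u: "u \<in> zvec n" and k: "k \<le> n" and tc: "(t + c) mod (n + 1) = 0"
  shows "card {i\<in>{1..n}. 1 \<le> zshift n c u i \<and> zshift n c u i \<le> k}
    = (\<Sum>j\<in>{Suc t..<Suc t + k}. residue_count n u j)"
proof -
  let ?I = "{i\<in>{1..n}. 1 \<le> zshift n c u i \<and> zshift n c u i \<le> k}"
  have "card ?I = (\<Sum>j\<in>{1..k}. card {i\<in>?I. zshift n c u i = j})"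
    by (rule card_eq_sum_card_fibres) auto
  also have "\<dots> = (\<Sum>j\<in>{1..k}. residue_count n u (j + t))"
  proof (rule sum.cong[OF refl])
    fix j assume j: "j \<in> {1..k}"
    have "zshift n c u i = j \<longleftrightarrow> u i = (j + t) mod (n + 1)" if i: "i \<in> {1..n}" for i
    proof -
      have "u i < n + 1" "j < n + 1" using u i j k unfolding zvec_def by (auto simp: less_Suc_eq_le)
      then have "(u i + c) mod (n + 1) = j \<longleftrightarrow> u i = (j + t) mod (n + 1)"
        by (rule mod_add_eq_iff[OF _ _ tc])
      then show ?thesis using i by (simp add: zshift_def)
    qed
    then have "{i\<in>?I. zshift n c u i = j} = {i\<in>{1..n}. u i = (j + t) mod (n + 1)}"
      using j by auto
    then show "card {i\<in>?I. zshift n c u i = j} = residue_count n u (j + t)"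
      by (simp add: residue_count_def)
  qed
  also have "\<dots> = (\<Sum>j\<in>{Suc t..<Suc t + k}. residue_count n u j)"
    using sum.shift_bounds_cl_nat_ivl[of "residue_count n u" 1 t k]
    by (simp add: atLeastLessThanSuc_atLeastAtMost add.commute)
  finally show ?thesis .
qed

lemma parking_function_iff_card:
  assumes "\<forall>i\<in>{1..n}. v i \<le> n" "\<forall>i. i \<notin> {1..n} \<longrightarrow> v i = 0"
  shows "parking_function n v \<longleftrightarrow> (\<forall>k\<in>{1..n}. k \<le> card {i\<in>{1..n}. 1 \<le> v i \<and> v i \<le> k})"
proof
  assume "parking_function n v"
  then show "\<forall>k\<in>{1..n}. k \<le> card {i\<in>{1..n}. 1 \<le> v i \<and> v i \<le> k}"
    unfolding parking_function_def by (metis (no_types, lifting) Collect_cong)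
next
  assume card: "\<forall>k\<in>{1..n}. k \<le> card {i\<in>{1..n}. 1 \<le> v i \<and> v i \<le> k}"
  have pos: "\<forall>i\<in>{1..n}. 1 \<le> v i"
  proof (cases "n = 0")
    case False
    then have "card {1..n} \<le> card {i\<in>{1..n}. 1 \<le> v i \<and> v i \<le> n}" using card by auto
    then have "{i\<in>{1..n}. 1 \<le> v i \<and> v i \<le> n} = {1..n}"
      by (intro card_seteq) auto
    then show ?thesis by blast
  qed simp
  then have "{i\<in>{1..n}. 1 \<le> v i \<and> v i \<le> k} = {i\<in>{1..n}. v i \<le> k}" for k
    by auto
  then show "parking_function n v" unfolding parking_function_def using pos assms card by auto
qed

lemma parking_function_zshift_iff:
  assumes u: "u \<in> zvec n" and tc: "(t + c) mod (n + 1) = 0"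
  shows "parking_function n (zshift n c u) \<longleftrightarrow> window_min (excess n u) (n + 1) (Suc t)"
proof -
  have "parking_function n (zshift n c u) \<longleftrightarrow>
      (\<forall>k\<in>{1..n}. k \<le> card {i\<in>{1..n}. 1 \<le> zshift n c u i \<and> zshift n c u i \<le> k})"
    by (rule parking_function_iff_card) (auto simp: zshift_def)
  also have "\<dots> \<longleftrightarrow> (\<forall>k\<in>{1..n}. excess n u (Suc t) \<le> excess n u (Suc t + k))"
  proof (rule ball_cong[OF refl])
    fix k assume "k \<in> {1..n}"
    then have k: "k \<le> n" by simp
    have "excess n u (Suc t + k) = excess n u (Suc t)
        + int (card {i\<in>{1..n}. 1 \<le> zshift n c u i \<and> zshift n c u i \<le> k}) - int k"
      unfolding card_zshift_atMost[OF u k tc] by (rule excess_add)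
    then show "k \<le> card {i\<in>{1..n}. 1 \<le> zshift n c u i \<and> zshift n c u i \<le> k}
        \<longleftrightarrow> excess n u (Suc t) \<le> excess n u (Suc t + k)" by simp
  qed
  also have "\<dots> \<longleftrightarrow> window_min (excess n u) (n + 1) (Suc t)"
    unfolding window_min_def by (simp add: atLeastLessThanSuc_atLeastAtMost)
  finally show ?thesis .
qed

lemma parking_function_zvec: "parking_function n f \<Longrightarrow> f \<in> zvec n"
  unfolding parking_function_def zvec_def by auto

lemma zshift_zvec: "zshift n c u \<in> zvec n"
  unfolding zshift_def zvec_def using less_Suc_eq_le by fastforce

lemma zshift_0: "u \<in> zvec n \<Longrightarrow> zshift n 0 u = u"
  unfolding zshift_def zvec_def by (rule ext) (auto simp: less_Suc_eq_le)

lemma zshift_mod: "zshift n (c mod (n + 1)) u = zshift n c u"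
  unfolding zshift_def by (rule ext) (auto simp: mod_add_right_eq)

lemma zshift_zshift: "zshift n c (zshift n d u) = zshift n (d + c) u"
  unfolding zshift_def by (rule ext) (auto simp: mod_add_left_eq add.assoc)

lemma exists_parking_zshift:
  assumes u: "u \<in> zvec n"
  shows "\<exists>c. parking_function n (zshift n c u)"
proof -
  obtain s where s: "s < n + 1" "window_min (excess n u) (n + 1) s"
    using window_min_exists[of "excess n u" "n + 1"] excess_period[OF u] by auto
  \<comment> \<open>with \<open>t = s + n\<close> and \<open>c = n + 2 - s\<close> one has \<open>t + c = 2 (n + 1)\<close>
    and \<open>Suc t = s + (n + 1)\<close>\<close>
  have min: "window_min (excess n u) (n + 1) (Suc (s + n))"
    using s(2) window_min_add_period[of "excess n u" "n + 1" s 1] excess_period[OF u] by simp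
  have tc: "(s + n + (n + 2 - s)) mod (n + 1) = 0"
  proof -
    have "s + n + (n + 2 - s) = (n + 1) * 2" using s(1) by simp
    then show ?thesis by (simp only: mod_mult_self1_is_0)
  qed
  show ?thesis using parking_function_zshift_iff[OF u tc] min by blast
qed

lemma zshift_parking_unique:
  assumes f: "parking_function n f" and g: "parking_function n (zshift n c f)"
  shows "zshift n c f = f"
proof -
  define M where "M = n + 1"
  define t where "t = M - c mod M"
  have u: "f \<in> zvec n" using parking_function_zvec[OF f] .
  have drift: "\<And>t. excess n f (t + M) = excess n f t - 1" using excess_period[OF u] M_def by simp
  have t: "0 < t" "t \<le> M" unfolding t_def M_def by auto
  have "(t + c) mod M = (t + c mod M) mod M" by (simp add: mod_add_right_eq)
  also have "\<dots> = 0" unfolding t_def M_def by simp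
  finally have "window_min (excess n f) M (Suc t)"
    using parking_function_zshift_iff[OF u] g M_def by simp
  moreover have "window_min (excess n f) M (Suc 0)"
    using parking_function_zshift_iff[OF u, of 0 0] f zshift_0[OF u] M_def by simp
  ultimately have "Suc t mod M = Suc 0 mod M"
    using window_min_unique[of "excess n f" M, OF drift] window_min_mod[of "excess n f" M, OF drift]
      M_def by simp
  then have "M dvd t" using mod_eq_dvd_iff_nat[of "Suc 0" "Suc t" M] by simp
  then have "t = M" using t by (simp add: dvd_imp_le le_antisym)
  then have "c mod M = 0" unfolding t_def M_def by linarith
  then show ?thesis using zshift_mod[of n c f] zshift_0[OF u] M_def by simp
qed

lemma zrel_iff_zshift: "(u, v) \<in> zrel n \<longleftrightarrow> u \<in> zvec n \<and> (\<exists>c. v = zshift n c u)"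
proof
  assume "(u, v) \<in> zrel n"
  then obtain c where u: "u \<in> zvec n" and v: "v \<in> zvec n"
    and c: "\<forall>i\<in>{1..n}. v i = (u i + c) mod (n + 1)"
    unfolding zrel_def by blast
  have "v = zshift n c u"
  proof
    fix i show "v i = zshift n c u i" using v c by (cases "i \<in> {1..n}") (auto simp: zvec_def zshift_def)
  qed
  then show "u \<in> zvec n \<and> (\<exists>c. v = zshift n c u)" using u by blast
next
  assume "u \<in> zvec n \<and> (\<exists>c. v = zshift n c u)"
  then show "(u, v) \<in> zrel n" unfolding zrel_def using zshift_zvec by (auto simp: zshift_def)
qed

lemma zrel_equiv: "equiv (zvec n) (zrel n)"
proof (rule equivI)
  show "zrel n \<subseteq> zvec n \<times> zvec n" using zshift_zvec by (auto simp: zrel_iff_zshift)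
  show "refl_on (zvec n) (zrel n)" by (rule refl_onI) (metis zrel_iff_zshift zshift_0)
  show "sym (zrel n)"
  proof (rule symI)
    fix u v assume "(u, v) \<in> zrel n"
    then obtain c where u: "u \<in> zvec n" and v: "v = zshift n c u" by (auto simp: zrel_iff_zshift)
    define M where "M = n + 1"
    have "(c + (M - c mod M)) mod M = (c mod M + (M - c mod M)) mod M" by (simp add: mod_add_left_eq)
    also have "\<dots> = 0" unfolding M_def by simp
    finally have "zshift n (M - c mod M) v = u"
      unfolding v zshift_zshift using zshift_mod[of n _ u] zshift_0[OF u] M_def by metis
    then show "(v, u) \<in> zrel n" using zshift_zvec[of n c u] unfolding v zrel_iff_zshift by metis
  qed
  show "trans (zrel n)" by (rule transI) (auto simp: zrel_iff_zshift zshift_zshift)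
qed

lemma zrel_class:
  assumes "u \<in> zvec n"
  shows "zrel n `` {u} = (\<lambda>c. zshift n c u) ` {..n}"
proof
  show "zrel n `` {u} \<subseteq> (\<lambda>c. zshift n c u) ` {..n}"
  proof
    fix v assume "v \<in> zrel n `` {u}"
    then obtain c where "v = zshift n c u" by (auto simp: zrel_iff_zshift)
    then have "v = zshift n (c mod (n + 1)) u" using zshift_mod[of n c u] by simp
    moreover have "c mod (n + 1) \<in> {..n}" using mod_less_divisor[of "n + 1" c] by simp
    ultimately show "v \<in> (\<lambda>c. zshift n c u) ` {..n}" by blast
  qed
  show "(\<lambda>c. zshift n c u) ` {..n} \<subseteq> zrel n `` {u}" using assms by (auto simp: zrel_iff_zshift)
qed

lemma card_zrel_class:
  assumes u: "u \<in> zvec n" and n: "n \<ge> 1"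
  shows "card (zrel n `` {u}) = n + 1"
proof -
  have "inj_on (\<lambda>c. zshift n c u) {..n}"
  proof (rule inj_onI)
    fix c d assume cd: "c \<in> {..n}" "d \<in> {..n}" and eq: "zshift n c u = zshift n d u"
    have eq1: "(u 1 + c) mod (n + 1) = (u 1 + d) mod (n + 1)"
      using fun_cong[OF eq, of 1] n by (simp add: zshift_def)
    have same: "x = y" if "x \<le> y" "y \<le> n" "(u 1 + x) mod (n + 1) = (u 1 + y) mod (n + 1)" for x y
    proof (rule ccontr)
      assume "x \<noteq> y"
      have "n + 1 dvd y - x" using mod_eq_dvd_iff_nat[of "u 1 + x" "u 1 + y" "n + 1"] that by simp
      then have "n + 1 \<le> y - x" using \<open>x \<noteq> y\<close> that(1) by (intro dvd_imp_le) auto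
      then show False using that(2) by simp
    qed
    show "c = d" using same[of c d] same[of d c] eq1 cd by (cases "c \<le> d") auto
  qed
  then show ?thesis unfolding zrel_class[OF u] by (simp add: card_image)
qed

lemma card_zvec: "card (zvec n) = (n + 1) ^ n"
proof -
  have "bij_betw (\<lambda>v. restrict v {1..n}) (zvec n) (PiE {1..n} (\<lambda>_. {0..n}))"
  proof (rule bij_betwI')
    fix u v assume u: "u \<in> zvec n" and v: "v \<in> zvec n"
    show "restrict u {1..n} = restrict v {1..n} \<longleftrightarrow> u = v"
    proof
      assume eq: "restrict u {1..n} = restrict v {1..n}"
      show "u = v"
      proof
        fix i show "u i = v i"
          using fun_cong[OF eq, of i] u v by (cases "i \<in> {1..n}") (auto simp: zvec_def)
      qed
    qed simp
  next
    fix u assume "u \<in> zvec n"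
    then show "restrict u {1..n} \<in> PiE {1..n} (\<lambda>_. {0..n})" unfolding zvec_def by auto
  next
    fix g assume g: "g \<in> PiE {1..n} (\<lambda>_. {0..n})"
    define v where "v = (\<lambda>i. if i \<in> {1..n} then g i else 0)"
    have "v \<in> zvec n" using g unfolding v_def zvec_def by auto
    moreover have "g = restrict v {1..n}"
      using g unfolding v_def by (auto simp: PiE_def extensional_def restrict_def)
    ultimately show "\<exists>v\<in>zvec n. g = restrict v {1..n}" by blast
  qed
  then have "card (zvec n) = card (PiE {1..n} (\<lambda>_. {0..n::nat}))" by (rule bij_betw_same_card)
  also have "\<dots> = (n + 1) ^ n" by (simp add: card_PiE)
  finally show ?thesis .
qed

lemma finite_zvec: "finite (zvec n)"
  using card_zvec[of n] by (intro card_ge_0_finite) simp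

lemma card_zvec_quotient:
  assumes n: "n \<ge> 1"
  shows "card (zvec n // zrel n) = (n + 1) ^ (n - 1)"
proof -
  have "(n + 1) * card (zvec n // zrel n) = card (\<Union>(zvec n // zrel n))"
  proof (rule card_partition)
    show "finite (zvec n // zrel n)" using finite_zvec zrel_equiv by (rule finite_quotient[OF _ equivE])
    show "finite (\<Union>(zvec n // zrel n))" using finite_zvec Union_quotient[OF zrel_equiv] by simp
    show "card C = n + 1" if "C \<in> zvec n // zrel n" for C
      using that card_zrel_class[OF _ n] unfolding quotient_def by auto
    show "C1 \<inter> C2 = {}" if "C1 \<in> zvec n // zrel n" "C2 \<in> zvec n // zrel n" "C1 \<noteq> C2" for C1 C2
      using quotient_disj[OF zrel_equiv that(1,2)] that(3) by blast
  qed
  also have "\<dots> = (n + 1) * (n + 1) ^ (n - 1)"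
    using Union_quotient[OF zrel_equiv] card_zvec n by (simp add: power_eq_if)
  finally show ?thesis by (simp only: mult_cancel1) simp
qed

lemma bij_betw_parking_zrel_classes:
  "bij_betw (\<lambda>f. zrel n `` {f}) {f. parking_function n f} (zvec n // zrel n)"
proof (rule bij_betw_imageI)
  show "inj_on (\<lambda>f. zrel n `` {f}) {f. parking_function n f}"
  proof (rule inj_onI)
    fix f g assume f: "f \<in> {f. parking_function n f}" and g: "g \<in> {f. parking_function n f}"
      and eq: "zrel n `` {f} = zrel n `` {g}"
    have "(f, g) \<in> zrel n"
      using eq_equiv_class_iff[OF zrel_equiv] eq f g parking_function_zvec by blast
    then obtain c where "g = zshift n c f" by (auto simp: zrel_iff_zshift)
    then show "f = g" using zshift_parking_unique f g by (metis mem_Collect_eq)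
  qed
  show "(\<lambda>f. zrel n `` {f}) ` {f. parking_function n f} = zvec n // zrel n"
  proof
    show "(\<lambda>f. zrel n `` {f}) ` {f. parking_function n f} \<subseteq> zvec n // zrel n"
      using parking_function_zvec by (auto intro: quotientI)
    show "zvec n // zrel n \<subseteq> (\<lambda>f. zrel n `` {f}) ` {f. parking_function n f}"
    proof
      fix C assume "C \<in> zvec n // zrel n"
      then obtain u where u: "u \<in> zvec n" and C: "C = zrel n `` {u}" by (auto elim: quotientE)
      obtain c where c: "parking_function n (zshift n c u)" using exists_parking_zshift[OF u] by blast
      have "(u, zshift n c u) \<in> zrel n" using u by (auto simp: zrel_iff_zshift)
      then have "C = zrel n `` {zshift n c u}" unfolding C by (rule equiv_class_eq[OF zrel_equiv])
      then show "C \<in> (\<lambda>f. zrel n `` {f}) ` {f. parking_function n f}" using c by blast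
    qed
  qed
qed

section \<open>Non-nesting arcs and their chains\<close>

locale nonnesting =
  fixes N :: "(nat \<times> nat) set"
  assumes arc_less: "(p, q) \<in> N \<Longrightarrow> p < q"
    and arc_right_unique: "(p, q) \<in> N \<Longrightarrow> (p, q') \<in> N \<Longrightarrow> q = q'"
    and arc_mono: "(p, q) \<in> N \<Longrightarrow> (p', q') \<in> N \<Longrightarrow> p < p' \<Longrightarrow> q < q'"
begin

lemma arc_left_unique: "(p, q) \<in> N \<Longrightarrow> (p', q) \<in> N \<Longrightarrow> p = p'"
  using arc_mono by (metis less_irrefl linorder_neqE_nat)

lemma single_valued: "single_valued N"
  unfolding single_valued_def using arc_right_unique by blast

lemma single_valued_converse: "single_valued (N\<inverse>)"
  unfolding single_valued_def using arc_left_unique by blast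

lemma rtrancl_le: "(p, q) \<in> N\<^sup>* \<Longrightarrow> p \<le> q"
  by (induction rule: rtrancl_induct) (auto dest: arc_less)

lemma start_unique:
  assumes "(a, q) \<in> N\<^sup>*" "(b, q) \<in> N\<^sup>*" "a \<notin> Range N" "b \<notin> Range N"
  shows "a = b"
proof -
  have "(q, a) \<in> (N\<inverse>)\<^sup>*" "(q, b) \<in> (N\<inverse>)\<^sup>*"
    using assms(1,2) by (auto simp: rtrancl_converse)
  moreover have "x = y" if "(x, y) \<in> (N\<inverse>)\<^sup>*" "x \<notin> Range N" for x y
    using that by (cases rule: converse_rtranclE) auto
  ultimately show ?thesis
    using single_valued_confluent[OF single_valued_converse] assms(3,4) by metis
qed

lemma rtrancl_of_common_start:
  assumes "(s, p) \<in> N\<^sup>*" "(s, q) \<in> N\<^sup>*" "p \<le> q"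
  shows "(p, q) \<in> N\<^sup>*"
  using single_valued_confluent[OF single_valued assms(1,2)] rtrancl_le assms(3)
  by (metis antisym rtrancl.rtrancl_refl)

end

locale chains = nonnesting N for P :: "nat set" and N and start :: "nat \<Rightarrow> nat" +
  assumes arcs_subset: "N \<subseteq> P \<times> P"
    and start: "p \<in> P \<Longrightarrow> start p \<in> P \<and> (start p, p) \<in> N\<^sup>* \<and> start p \<notin> Range N"
begin

lemma start_in: "p \<in> P \<Longrightarrow> start p \<in> P"
  using start by blast

lemma start_rtrancl: "p \<in> P \<Longrightarrow> (start p, p) \<in> N\<^sup>*"
  using start by blast

lemma start_not_in_Range: "p \<in> P \<Longrightarrow> start p \<notin> Range N"
  using start by blast

lemma arc_in: "(p, q) \<in> N \<Longrightarrow> p \<in> P \<and> q \<in> P"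
  using arcs_subset by blast

lemma start_eqI: "p \<in> P \<Longrightarrow> (s, p) \<in> N\<^sup>* \<Longrightarrow> s \<notin> Range N \<Longrightarrow> start p = s"
  using start_unique start by blast

lemma start_arc: "(p, q) \<in> N \<Longrightarrow> start q = start p"
  using arc_in start_rtrancl start_not_in_Range start_eqI
  by (meson rtrancl.rtrancl_into_rtrancl)

lemma start_eq_self_iff: "p \<in> P \<Longrightarrow> start p = p \<longleftrightarrow> p \<notin> Range N"
  using start_eqI start_not_in_Range by fastforce

lemma start_start: "p \<in> P \<Longrightarrow> start (start p) = start p"
  using start_in start_eq_self_iff start_not_in_Range by blast

lemma start_le: "p \<in> P \<Longrightarrow> start p \<le> p"
  using start_rtrancl rtrancl_le by blast

lemma rtrancl_if_same_start: "p \<in> P \<Longrightarrow> q \<in> P \<Longrightarrow> start p = start q \<Longrightarrow> p \<le> q \<Longrightarrow> (p, q) \<in> N\<^sup>*"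
  using rtrancl_of_common_start start_rtrancl by metis

lemma in_Domain_iff: "p \<in> P \<Longrightarrow> p \<in> Domain N \<longleftrightarrow> (\<exists>q\<in>P. p < q \<and> start q = start p)"
proof
  assume "p \<in> Domain N"
  then show "\<exists>q\<in>P. p < q \<and> start q = start p" using arc_in arc_less start_arc by blast
next
  assume "p \<in> P" "\<exists>q\<in>P. p < q \<and> start q = start p"
  then obtain q where "(p, q) \<in> N\<^sup>*" "p < q"
    using rtrancl_if_same_start by (metis less_imp_le)
  then show "p \<in> Domain N" by (cases rule: converse_rtranclE) auto
qed

lemma component_iff_same_start:
  assumes "p \<in> P" "q \<in> P"
  shows "(p, q) \<in> (N \<union> N\<inverse>)\<^sup>* \<longleftrightarrow> start p = start q"
proof
  assume "(p, q) \<in> (N \<union> N\<inverse>)\<^sup>*"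
  then show "start p = start q" by (induction rule: rtrancl_induct) (auto dest: start_arc)
next
  assume same: "start p = start q"
  have "(start x, x) \<in> (N \<union> N\<inverse>)\<^sup>*" if "x \<in> P" for x
    using start_rtrancl[OF that] rtrancl_mono[of N "N \<union> N\<inverse>"] by blast
  moreover have "(x, y) \<in> (N \<union> N\<inverse>)\<^sup>* \<Longrightarrow> (y, x) \<in> (N \<union> N\<inverse>)\<^sup>*" for x y
    using rtrancl_converseI[of x y "N \<union> N\<inverse>"] by (simp add: converse_Un Un_commute)
  ultimately show "(p, q) \<in> (N \<union> N\<inverse>)\<^sup>*"
    using assms same by (metis rtrancl_trans)
qed

end

definition chain_start :: "nat set \<Rightarrow> (nat \<times> nat) set \<Rightarrow> nat \<Rightarrow> nat" where
  "chain_start P N p = (SOME s. s \<in> P \<and> s \<notin> Range N \<and> (s, p) \<in> N\<^sup>*)"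

lemma (in nonnesting) chains_chain_start:
  assumes sub: "N \<subseteq> P \<times> P"
  shows "chains P N (chain_start P N)"
proof
  fix p assume "p \<in> P"
  then have "\<exists>s. s \<in> P \<and> s \<notin> Range N \<and> (s, p) \<in> N\<^sup>*"
  proof (induction p rule: less_induct)
    case (less p)
    show ?case
    proof (cases "p \<in> Range N")
      case True
      then obtain q where q: "(q, p) \<in> N" by blast
      then obtain s where "s \<in> P" "s \<notin> Range N" "(s, q) \<in> N\<^sup>*"
        using less.IH[of q] arc_less sub by blast
      then show ?thesis using q by (meson rtrancl.rtrancl_into_rtrancl)
    qed (use less.prems in blast)
  qed
  then show "chain_start P N p \<in> P \<and> (chain_start P N p, p) \<in> N\<^sup>* \<and> chain_start P N p \<notin> Range N"
    unfolding chain_start_def by (rule someI2_ex) blast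
qed (use sub in auto)

lemma (in chains) chain_start_eq: "p \<in> P \<Longrightarrow> chain_start P N p = start p"
  using chains.start_eqI[OF chains_chain_start[OF arcs_subset]] start_eqI
    chains.start[OF chains_chain_start[OF arcs_subset]] start by metis

lemma nonnesting_arc_not_less:
  assumes "nonnesting N" "nonnesting N'" "Range N \<subseteq> Range N'"
    and below: "\<And>q r. q < p \<Longrightarrow> (q, r) \<in> N' \<Longrightarrow> (q, r) \<in> N"
    and pa: "(p, a) \<in> N" and pb: "(p, b) \<in> N'"
  shows "\<not> a < b"
proof
  assume "a < b"
  interpret N: nonnesting N by fact
  interpret N': nonnesting N' by fact
  obtain q where qa: "(q, a) \<in> N'" using assms(3) pa by blast
  consider "q = p" | "q < p" | "p < q" by linarith
  then show False
  proof cases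
    case 1
    then show False using N'.arc_right_unique[OF pb] qa \<open>a < b\<close> by blast
  next
    case 2
    then show False using N.arc_left_unique[OF pa] below[OF 2 qa] by blast
  next
    case 3
    then show False using N'.arc_mono[OF pb qa] \<open>a < b\<close> by simp
  qed
qed

theorem chains_unique:
  assumes c: "chains P N start" and c': "chains P N' start'" and fin: "finite P"
    and fibres: "\<And>v. card {p\<in>P. start p = v} = card {p\<in>P. start' p = v}"
  shows "N = N'" and "\<forall>p\<in>P. start p = start' p"
proof -
  interpret c: chains P N start by fact
  interpret c': chains P N' start' by fact
  have fibre_nonempty: "start a = a \<longleftrightarrow> 0 < card {p\<in>P. start p = a}"
    "start' a = a \<longleftrightarrow> 0 < card {p\<in>P. start' p = a}" if "a \<in> P" for a
    using that fin c.start_start c'.start_start by (auto simp: card_gt_0_iff)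
  have "a \<in> Range N \<longleftrightarrow> a \<in> Range N'" if "a \<in> P" for a
    using fibre_nonempty[OF that] fibres[of a] c.start_eq_self_iff[OF that] c'.start_eq_self_iff[OF that]
    by metis
  then have same_range: "Range N = Range N'"
    using c.arcs_subset c'.arcs_subset by auto
  have agree: "start p = start' p \<and> (\<forall>r. (p, r) \<in> N \<longleftrightarrow> (p, r) \<in> N')" if "p \<in> P" for p
    using that
  proof (induction p rule: less_induct)
    case (less p)
    have below: "(q, r) \<in> N \<longleftrightarrow> (q, r) \<in> N'" if "q < p" for q r
      using less.IH[OF that] that c.arc_in c'.arc_in by blast
    have start_p: "start p = start' p"
    proof (cases "p \<in> Range N")
      case True
      then obtain q where q: "(q, p) \<in> N" by blast
      then have "q < p" "q \<in> P" using c.arc_less c.arc_in by auto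
      then show ?thesis using q below less.IH c.start_arc c'.start_arc by metis
    next
      case False
      then show ?thesis using same_range c.start_eq_self_iff c'.start_eq_self_iff less.prems by metis
    qed
    define s where "s = start p"
    have split: "card {q\<in>P. f q = s} = card {q\<in>P. q \<le> p \<and> f q = s} + card {q\<in>P. p < q \<and> f q = s}"
      for f :: "nat \<Rightarrow> nat"
      using fin by (subst card_Un_disjoint[symmetric]) (auto intro: arg_cong[where f = card])
    have "{q\<in>P. q \<le> p \<and> start q = s} = {q\<in>P. q \<le> p \<and> start' q = s}"
      using less.IH start_p by (auto simp: le_less)
    then have "card {q\<in>P. p < q \<and> start q = s} = card {q\<in>P. p < q \<and> start' q = s}"
      using split[of start] split[of start'] fibres[of s] by simp
    moreover have "p \<in> Domain N \<longleftrightarrow> 0 < card {q\<in>P. p < q \<and> start q = s}"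
      using c.in_Domain_iff[OF less.prems] fin unfolding s_def by (auto simp: card_gt_0_iff)
    moreover have "p \<in> Domain N' \<longleftrightarrow> 0 < card {q\<in>P. p < q \<and> start' q = s}"
      using c'.in_Domain_iff[OF less.prems] fin start_p unfolding s_def by (auto simp: card_gt_0_iff)
    ultimately have "p \<in> Domain N \<longleftrightarrow> p \<in> Domain N'" by simp
    moreover have "a = b" if pa: "(p, a) \<in> N" and pb: "(p, b) \<in> N'" for a b
    proof -
      have "\<not> a < b"
        by (rule nonnesting_arc_not_less[OF c.nonnesting_axioms c'.nonnesting_axioms _ _ pa pb])
          (use same_range below in auto)
      moreover have "\<not> b < a"
        by (rule nonnesting_arc_not_less[OF c'.nonnesting_axioms c.nonnesting_axioms _ _ pb pa])
          (use same_range below in auto)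
      ultimately show ?thesis by simp
    qed
    ultimately have "(p, r) \<in> N \<longleftrightarrow> (p, r) \<in> N'" for r by blast
    then show ?case using start_p by blast
  qed
  then show "\<forall>p\<in>P. start p = start' p" by blast
  show "N = N'"
  proof (intro set_eqI iffI)
    fix x assume "x \<in> N"
    then show "x \<in> N'" using agree c.arc_in by (cases x) blast
  next
    fix x assume "x \<in> N'"
    then show "x \<in> N" using agree c'.arc_in by (cases x) blast
  qed
qed

lemma chains_insert_singleton:
  assumes "chains P N start" and a: "\<forall>p\<in>P. a < p"
  shows "chains (insert a P) N (start(a := a))"
    and "card {p\<in>insert a P. (start(a := a)) p = v} = (if v = a then 1 else card {p\<in>P. start p = v})"
proof -
  interpret chains P N start by fact
  have "a \<notin> Range N" using a arc_in by blast
  then show "chains (insert a P) N (start(a := a))"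
    using nonnesting_axioms arcs_subset start a by (intro chains.intro chains_axioms.intro) auto
  have "{p\<in>insert a P. (start(a := a)) p = v} = (if v = a then {a} else {p\<in>P. start p = v})"
    using a start_in by auto
  then show "card {p\<in>insert a P. (start(a := a)) p = v} = (if v = a then 1 else card {p\<in>P. start p = v})"
    by simp
qed

lemma chains_insert_arc:
  assumes "chains P N start" and fin: "finite P" and a: "\<forall>p\<in>P. a < p"
    and r: "r \<in> P" "r \<notin> Range N" and above: "\<forall>q\<in>Range N. r < q"
  defines "start' \<equiv> \<lambda>p. if p = a \<or> start p = r then a else start p"
  shows "chains (insert a P) (insert (a, r) N) start'"
    and "card {p\<in>insert a P. start' p = v} =
      (if v = a then Suc (card {p\<in>P. start p = r}) else if v = r then 0 else card {p\<in>P. start p = v})"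
proof -
  interpret chains P N start by fact
  let ?N = "insert (a, r) N" and ?start = start'
  note start'_def [simp]
  have a_free: "a \<notin> Domain N" "a \<notin> Range N" using a arc_in by fastforce+
  have "nonnesting ?N"
  proof
    show "p < q" if "(p, q) \<in> ?N" for p q using that a r arc_less by auto
    show "q = q'" if "(p, q) \<in> ?N" "(p, q') \<in> ?N" for p q q'
      using that a_free arc_right_unique by auto
    show "q < q'" if "(p, q) \<in> ?N" "(p', q') \<in> ?N" "p < p'" for p q p' q'
      using that a arc_in above arc_mono by fastforce
  qed
  moreover have "?start p \<in> insert a P \<and> (?start p, p) \<in> ?N\<^sup>* \<and> ?start p \<notin> Range ?N"
    if p: "p \<in> insert a P" for p
  proof -
    have N_sub: "N\<^sup>* \<subseteq> ?N\<^sup>*" by (rule rtrancl_mono) blast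
    consider "p = a" | "p \<in> P" "start p = r" | "p \<in> P" "p \<noteq> a" "start p \<noteq> r"
      using p by blast
    then show ?thesis
    proof cases
      case 2
      then have "(a, p) \<in> ?N\<^sup>*"
        using start_rtrancl N_sub by (metis converse_rtrancl_into_rtrancl insertI1 subsetD)
      then show ?thesis using 2 a_free r a by auto
    next
      case 3
      then show ?thesis using start[of p] N_sub by auto
    qed (use a_free r a in auto)
  qed
  ultimately show "chains (insert a P) ?N ?start"
    using arcs_subset r by (intro chains.intro chains_axioms.intro) auto
  have "{p\<in>insert a P. ?start p = v} =
      (if v = a then insert a {p\<in>P. start p = r} else if v = r then {} else {p\<in>P. start p = v})"
    using a r start_in by auto
  moreover have "finite {p\<in>P. start p = r}" using fin by simp
  moreover have "a \<notin> {p\<in>P. start p = r}" using a by auto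
  ultimately show "card {p\<in>insert a P. ?start p = v} =
      (if v = a then Suc (card {p\<in>P. start p = r}) else if v = r then 0 else card {p\<in>P. start p = v})"
    by simp
qed

lemma exists_first_zero_multiplicity:
  fixes m :: "nat \<Rightarrow> nat"
  assumes fin: "finite P" and a: "\<forall>p\<in>P. a < p"
    and prefix: "\<forall>v\<in>insert a P. card {u\<in>insert a P. u \<le> v} \<le> (\<Sum>u\<in>{u\<in>insert a P. u \<le> v}. m u)"
    and total: "(\<Sum>u\<in>insert a P. m u) = card (insert a P)" and ma: "2 \<le> m a"
  obtains r where "r \<in> P" "m r = 0" "\<And>q. q \<in> P \<Longrightarrow> m q = 0 \<Longrightarrow> r \<le> q"
    "\<forall>v\<in>P. card {u\<in>P. u \<le> v} \<le> (\<Sum>u\<in>{u\<in>P. u \<le> v}. (m(r := m a - 1)) u)"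
    "(\<Sum>u\<in>P. (m(r := m a - 1)) u) = card P"
proof -
  have a_notin: "a \<notin> P" using a by blast
  have "\<exists>r\<in>P. m r = 0"
  proof (rule ccontr)
    assume "\<not> (\<exists>r\<in>P. m r = 0)"
    then have "card P \<le> (\<Sum>u\<in>P. m u)" using sum_mono[of P "\<lambda>_. 1" m] by (simp add: Suc_le_eq)
    then show False using total fin a_notin ma by simp
  qed
  define r where "r = Min {u\<in>P. m u = 0}"
  have r: "r \<in> P" "m r = 0" "\<And>q. q \<in> P \<Longrightarrow> m q = 0 \<Longrightarrow> r \<le> q"
    using Min_in[of "{u\<in>P. m u = 0}"] \<open>\<exists>r\<in>P. m r = 0\<close> fin unfolding r_def by auto
  define m' where "m' = m(r := m a - 1)"
  have sum_m': "(\<Sum>u\<in>S. m' u) = (m a - 1) + (\<Sum>u\<in>S. m u)" if "finite S" "r \<in> S" for S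
    using that r(2) sum.remove[of S r m'] sum.remove[of S r m]
    by (simp add: m'_def sum.cong[of "S - {r}" "S - {r}" "m(r := m a - 1)" m])
  have "card {u\<in>P. u \<le> v} \<le> (\<Sum>u\<in>{u\<in>P. u \<le> v}. m' u)" if v: "v \<in> P" for v
  proof (cases "v < r")
    case True
    then have "\<forall>u\<in>{u\<in>P. u \<le> v}. 1 \<le> m' u" using r(3) unfolding m'_def by fastforce
    then show ?thesis using sum_mono[of "{u\<in>P. u \<le> v}" "\<lambda>_. 1" m'] by simp
  next
    case False
    have "card {u\<in>insert a P. u \<le> v} \<le> (\<Sum>u\<in>{u\<in>insert a P. u \<le> v}. m u)"
      using prefix v by blast
    moreover have "{u\<in>insert a P. u \<le> v} = insert a {u\<in>P. u \<le> v}" using a v by auto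
    ultimately have "Suc (card {u\<in>P. u \<le> v}) \<le> m a + (\<Sum>u\<in>{u\<in>P. u \<le> v}. m u)"
      using fin a_notin by simp
    then show ?thesis using sum_m'[of "{u\<in>P. u \<le> v}"] r(1) False fin by simp
  qed
  moreover have "(\<Sum>u\<in>P. m' u) = card P" using sum_m'[OF fin r(1)] total fin a_notin ma by simp
  ultimately show ?thesis using that r unfolding m'_def by blast
qed

theorem chains_exists:
  assumes "finite P"
    and prefix: "\<forall>v\<in>P. card {u\<in>P. u \<le> v} \<le> (\<Sum>u\<in>{u\<in>P. u \<le> v}. m u)"
    and total: "(\<Sum>u\<in>P. m u) = card P"
  shows "\<exists>N start. chains P N start \<and> (\<forall>v\<in>P. card {p\<in>P. start p = v} = m v)"
  using assms
proof (induction "card P" arbitrary: P m)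
  case 0
  then show ?case by (auto intro!: chains.intro chains_axioms.intro nonnesting.intro)
next
  case (Suc k)
  define a where "a = Min P"
  define P' where "P' = P - {a}"
  have "a \<in> P" using Suc.hyps(2) Suc.prems(1) unfolding a_def by (intro Min_in) auto
  then have P: "P = insert a P'" "a \<notin> P'" "finite P'" "card P' = k"
    using Suc.hyps(2) Suc.prems(1) unfolding P'_def by auto
  have a_less: "\<forall>p\<in>P'. a < p" using Suc.prems(1) unfolding a_def P'_def by (simp add: order_less_le)
  have "{u\<in>P. u \<le> a} = {a}" using a_less P by auto
  then have "1 \<le> m a" using Suc.prems(2) P by force
  then consider "m a = 1" | "m a \<ge> 2" by linarith
  then show ?case
  proof cases
    case 1
    have "{u\<in>P. u \<le> v} = insert a {u\<in>P'. u \<le> v}" if "v \<in> P'" for v using that a_less P by auto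
    then have "\<forall>v\<in>P'. card {u\<in>P'. u \<le> v} \<le> (\<Sum>u\<in>{u\<in>P'. u \<le> v}. m u)"
      using Suc.prems(2) 1 P by fastforce
    moreover have "(\<Sum>u\<in>P'. m u) = card P'" using Suc.prems(3) P 1 by simp
    ultimately obtain N start where N: "chains P' N start"
      and fibres: "\<forall>v\<in>P'. card {p\<in>P'. start p = v} = m v"
      using Suc.hyps(1)[of P' m] P by blast
    have "card {p\<in>P. (start(a := a)) p = v} = m v" if "v \<in> P" for v
      using chains_insert_singleton(2)[OF N a_less, of v] fibres 1 P that by (cases "v = a") auto
    then show ?thesis using chains_insert_singleton(1)[OF N a_less] P by blast
  next
    case 2
    \<comment> \<open>\<open>a\<close> is prepended to the chain starting at the first value \<open>r\<close> of multiplicity \<open>0\<close>,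
      whose multiplicity becomes \<open>m a - 1\<close>\<close>
    have "\<forall>v\<in>insert a P'. card {u\<in>insert a P'. u \<le> v} \<le> (\<Sum>u\<in>{u\<in>insert a P'. u \<le> v}. m u)"
      "(\<Sum>u\<in>insert a P'. m u) = card (insert a P')"
      using Suc.prems(2,3) unfolding P(1) by blast+
    then obtain r where r: "r \<in> P'" "m r = 0" "\<And>q. q \<in> P' \<Longrightarrow> m q = 0 \<Longrightarrow> r \<le> q"
      and m': "\<forall>v\<in>P'. card {u\<in>P'. u \<le> v} \<le> (\<Sum>u\<in>{u\<in>P'. u \<le> v}. (m(r := m a - 1)) u)"
        "(\<Sum>u\<in>P'. (m(r := m a - 1)) u) = card P'"
      using exists_first_zero_multiplicity[where m = m and a = a, OF P(3) a_less _ _ 2] by blast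
    obtain N start where N: "chains P' N start"
      and fibres: "\<forall>v\<in>P'. card {p\<in>P'. start p = v} = (m(r := m a - 1)) v"
      using Suc.hyps(1)[OF _ P(3) m'] P by blast
    interpret N: chains P' N start by (rule N)
    have "card {p\<in>P'. start p = r} = m a - 1" using fibres r(1) by simp
    then have "{p\<in>P'. start p = r} \<noteq> {}" using 2 by (intro notI) simp
    then have r_not_Range: "r \<notin> Range N" using N.start_not_in_Range by blast
    have above: "\<forall>q\<in>Range N. r < q"
    proof
      fix q assume q: "q \<in> Range N"
      then have "q \<in> P'" "q \<noteq> r" using N.arc_in r_not_Range by auto
      moreover have "{p\<in>P'. start p = q} = {}" using N.start_not_in_Range q by blast
      ultimately have "m q = 0" using fibres by (metis card.empty fun_upd_other)
      then show "r < q" using r(3) \<open>q \<in> P'\<close> \<open>q \<noteq> r\<close> by fastforce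
    qed
    let ?start = "\<lambda>p. if p = a \<or> start p = r then a else start p"
    have "card {p\<in>P. ?start p = v} = m v" if "v \<in> P" for v
      using chains_insert_arc(2)[OF N P(3) a_less r(1) r_not_Range above, of v] fibres P r(1,2) 2 that
      by (cases "v = a"; cases "v = r") auto
    then show ?thesis using chains_insert_arc(1)[OF N P(3) a_less r(1) r_not_Range above] P by blast
  qed
qed

lemma strict_mono_on_bij_betw_eq:
  fixes h1 h2 :: "'a::linorder \<Rightarrow> 'b::linorder"
  assumes "finite C"
    and h1: "bij_betw h1 C Q" "strict_mono_on C h1"
    and h2: "bij_betw h2 C Q" "strict_mono_on C h2"
    and j: "j \<in> C"
  shows "h1 j = h2 j"
proof -
  have fin: "finite Q" using \<open>finite C\<close> h1(1) bij_betw_finite by blast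
  have count: "card {q\<in>Q. q < h j} = card {c\<in>C. c < j}"
    if h: "bij_betw h C Q" "strict_mono_on C h" for h
  proof -
    have "h ` {c\<in>C. c < j} = {q\<in>Q. q < h j}"
    proof
      show "h ` {c\<in>C. c < j} \<subseteq> {q\<in>Q. q < h j}"
        using h j by (auto simp: bij_betw_def strict_mono_on_def)
      show "{q\<in>Q. q < h j} \<subseteq> h ` {c\<in>C. c < j}"
      proof
        fix q assume q: "q \<in> {q\<in>Q. q < h j}"
        then obtain c where c: "c \<in> C" "q = h c" using h(1) by (auto simp: bij_betw_def)
        have "c < j"
        proof (rule ccontr)
          assume "\<not> c < j"
          then have "h j \<le> h c"
            using h(2) c j by (metis linorder_not_less order.order_iff_strict strict_mono_onD)
          then show False using q c by auto
        qed
        then show "q \<in> h ` {c\<in>C. c < j}" using c by auto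
      qed
    qed
    moreover have "inj_on h {c\<in>C. c < j}"
      using h(1) by (auto simp: bij_betw_def intro: inj_on_subset)
    ultimately show ?thesis by (metis card_image)
  qed
  have less: "card {q\<in>Q. q < a} < card {q\<in>Q. q < b}" if "a < b" "a \<in> Q" for a b
    using that fin by (intro psubset_card_mono) auto
  have "h1 j \<in> Q" "h2 j \<in> Q" using h1(1) h2(1) j by (auto simp: bij_betw_def)
  then show ?thesis
    using count[OF h1] count[OF h2] less[of "h1 j" "h2 j"] less[of "h2 j" "h1 j"]
    by (cases "h1 j" "h2 j" rule: linorder_cases) auto
qed

lemma ex_strict_mono_on_bij_betw:
  fixes C Q :: "'a::wellorder set"
  assumes "finite C" "finite Q" "card C = card Q"
  shows "\<exists>h. bij_betw h C Q \<and> strict_mono_on C h"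
proof -
  obtain hC where hC: "bij_betw hC {..<card C} C" "strict_mono_on {..<card C} hC"
    using ex_bij_betw_strict_mono_card[OF assms(1)] by blast
  obtain hQ where hQ: "bij_betw hQ {..<card C} Q" "strict_mono_on {..<card C} hQ"
    using ex_bij_betw_strict_mono_card[OF assms(2)] assms(3) by metis
  define g where "g = inv_into {..<card C} hC"
  have g: "bij_betw g C {..<card C}" unfolding g_def using hC(1) by (rule bij_betw_inv_into)
  have "strict_mono_on C g"
  proof (rule strict_mono_onI)
    fix a b assume ab: "a \<in> C" "b \<in> C" "a < b"
    have "g a \<in> {..<card C}" "g b \<in> {..<card C}" "hC (g a) = a" "hC (g b) = b"
      using ab hC(1) g unfolding g_def by (auto simp: bij_betw_def bij_betw_inv_into_right)
    then show "g a < g b"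
      using hC(2) ab(3) by (metis not_less_iff_gr_or_eq strict_mono_onD)
  qed
  have "strict_mono_on C (hQ \<circ> g)"
  proof (rule strict_mono_onI)
    fix a b assume ab: "a \<in> C" "b \<in> C" "a < b"
    have "g a < g b" using \<open>strict_mono_on C g\<close> ab by (rule strict_mono_onD)
    moreover have "g a \<in> {..<card C}" "g b \<in> {..<card C}" using bij_betw_apply[OF g] ab by auto
    ultimately show "(hQ \<circ> g) a < (hQ \<circ> g) b" using hQ(2) by (simp add: strict_mono_onD)
  qed
  moreover have "bij_betw (hQ \<circ> g) C Q" using g hQ(1) by (rule bij_betw_trans)
  ultimately show ?thesis by blast
qed

section \<open>Regions of the Shi arrangement\<close>

definition shi_cell :: "nat \<Rightarrow> (nat \<Rightarrow> real) \<Rightarrow> (nat \<Rightarrow> real) set" where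
  "shi_cell n x = {y \<in> shi_complement n. \<forall>i j. 1 \<le> i \<longrightarrow> i < j \<longrightarrow> j \<le> n \<longrightarrow>
      (y i < y j \<longleftrightarrow> x i < x j) \<and> (1 < y i - y j \<longleftrightarrow> 1 < x i - x j)}"

lemma self_in_shi_cell: "x \<in> shi_complement n \<Longrightarrow> x \<in> shi_cell n x"
  unfolding shi_cell_def by blast

lemma segment_in_shi_cell:
  assumes y: "y \<in> shi_cell n x" and z: "z \<in> shi_cell n x" and t: "0 \<le> t" "t \<le> 1"
  shows "(\<lambda>k. (1 - t) * y k + t * z k) \<in> shi_cell n x"
proof -
  let ?w = "\<lambda>k. (1 - t) * y k + t * z k"
  have below: "?w i - ?w j < c" if "y i - y j < c" "z i - z j < c" for i j c
    using convex_bound_lt[OF that, of "1 - t" t] t by (simp add: algebra_simps)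
  have above: "c < ?w i - ?w j" if "c < y i - y j" "c < z i - z j" for i j c
    using convex_bound_lt[of "-(y i - y j)" "-c" "-(z i - z j)" "1 - t" t] that t
    by (simp add: algebra_simps)
  have "?w i - ?w j \<noteq> 0 \<and> ?w i - ?w j \<noteq> 1 \<and>
      (?w i < ?w j \<longleftrightarrow> x i < x j) \<and> (1 < ?w i - ?w j \<longleftrightarrow> 1 < x i - x j)"
    if ij: "1 \<le> i" "i < j" "j \<le> n" for i j
  proof -
    have facts: "y i - y j \<noteq> 0" "y i - y j \<noteq> 1" "z i - z j \<noteq> 0" "z i - z j \<noteq> 1"
      "y i < y j \<longleftrightarrow> x i < x j" "1 < y i - y j \<longleftrightarrow> 1 < x i - x j"
      "z i < z j \<longleftrightarrow> x i < x j" "1 < z i - z j \<longleftrightarrow> 1 < x i - x j"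
      using y z ij unfolding shi_cell_def shi_complement_def by auto
    consider "x i < x j" | "\<not> x i < x j" "\<not> 1 < x i - x j" | "1 < x i - x j"
      by linarith
    then show ?thesis
    proof cases
      case 1
      then show ?thesis using below[of i j 0] facts by auto
    next
      case 2
      then have "0 < y i - y j" "y i - y j < 1" "0 < z i - z j" "z i - z j < 1"
        using facts by auto
      then show ?thesis using below[of i j 1] above[of 0 i j] 2 by auto
    next
      case 3
      then show ?thesis using above[of 1 i j] facts by auto
    qed
  qed
  moreover have "?w \<in> shi_space n"
    using y z unfolding shi_cell_def shi_complement_def shi_space_def by auto
  ultimately show ?thesis unfolding shi_cell_def shi_complement_def by auto
qed

lemma shi_cell_subset_component:
  assumes x: "x \<in> shi_complement n"
  shows "shi_cell n x \<subseteq> connected_component_set (shi_complement n) x"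
proof
  fix y assume y: "y \<in> shi_cell n x"
  define \<gamma> where "\<gamma> = (\<lambda>t::real. (\<lambda>k. (1 - t) * x k + t * y k))"
  have "continuous_on {0..1} \<gamma>"
    unfolding \<gamma>_def by (intro continuous_on_coordinatewise_then_product continuous_intros)
  then have "connected (\<gamma> ` {0..1})" using connected_Icc by (rule connected_continuous_image)
  moreover have "\<gamma> ` {0..1} \<subseteq> shi_complement n"
    using segment_in_shi_cell[OF self_in_shi_cell[OF x] y] unfolding \<gamma>_def shi_cell_def by auto
  moreover have "\<gamma> 0 = x" "\<gamma> 1 = y" unfolding \<gamma>_def by auto
  ultimately show "y \<in> connected_component_set (shi_complement n) x"
    by (metis atLeastAtMost_iff connected_componentI image_eqI mem_Collect_eq order_refl zero_le_one)
qed

lemma connected_real_same_side: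
  fixes S :: "real set"
  assumes "connected S" "a \<in> S" "b \<in> S" "c \<notin> S"
  shows "a < c \<longleftrightarrow> b < c"
  using connectedD_interval[OF assms(1-3), of c] connectedD_interval[OF assms(1) assms(3,2), of c] assms(4)
  by (metis less_le_not_le linorder_le_cases)

lemma component_subset_shi_cell:
  "connected_component_set (shi_complement n) x \<subseteq> shi_cell n x"
proof
  fix y assume "y \<in> connected_component_set (shi_complement n) x"
  then obtain T where T: "connected T" "T \<subseteq> shi_complement n" "x \<in> T" "y \<in> T"
    unfolding connected_component_def by blast
  have "(y i < y j \<longleftrightarrow> x i < x j) \<and> (1 < y i - y j \<longleftrightarrow> 1 < x i - x j)"
    if ij: "1 \<le> i" "i < j" "j \<le> n" for i j
  proof -
    \<comment> \<open>the difference of coordinates \<open>i\<close> and \<open>j\<close> never crosses \<open>0\<close> or \<open>1\<close> on \<open>T\<close>\<close>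
    let ?d = "\<lambda>z::nat \<Rightarrow> real. z i - z j"
    have "continuous_on T ?d"
      by (intro continuous_intros continuous_on_subset[OF continuous_on_product_coordinates]) auto
    then have "connected (?d ` T)" using T(1) connected_continuous_image by blast
    moreover have "0 \<notin> ?d ` T" "1 \<notin> ?d ` T" using T(2) ij unfolding shi_complement_def by auto
    ultimately have "?d y < 0 \<longleftrightarrow> ?d x < 0" "?d y < 1 \<longleftrightarrow> ?d x < 1"
      using connected_real_same_side T(3,4) by blast+
    moreover have "?d y \<noteq> 1" "?d x \<noteq> 1" using \<open>1 \<notin> ?d ` T\<close> T(3,4) by auto
    ultimately show ?thesis by auto
  qed
  then show "y \<in> shi_cell n x" using T unfolding shi_cell_def by blast
qed

lemma shi_regions_eq: "shi_regions n = {shi_cell n x |x. x \<in> shi_complement n}"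
  unfolding shi_regions_def
  using shi_cell_subset_component component_subset_shi_cell by (metis subset_antisym)

definition shi_rank :: "nat \<Rightarrow> (nat \<Rightarrow> real) \<Rightarrow> nat \<Rightarrow> nat" where
  "shi_rank n x i = Suc (card {j\<in>{1..n}. x i < x j})"

definition arcs_at :: "nat \<Rightarrow> (nat \<Rightarrow> real) \<Rightarrow> (nat \<times> nat) set" where
  "arcs_at n x = {(i, j). 1 \<le> i \<and> i < j \<and> j \<le> n \<and> 1 < x i - x j}"

lemma shi_complement_inj_on:
  assumes "x \<in> shi_complement n"
  shows "inj_on x {1..n}"
proof (rule inj_onI)
  fix i j assume ij: "i \<in> {1..n}" "j \<in> {1..n}" "x i = x j"
  have ne: "x a \<noteq> x b" if "1 \<le> a" "a < b" "b \<le> n" for a b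
    using assms that unfolding shi_complement_def by auto
  show "i = j" using ij ne[of i j] ne[of j i] by (cases i j rule: linorder_cases) auto
qed

context
  fixes n :: nat and x :: "nat \<Rightarrow> real"
  assumes x: "x \<in> shi_complement n"
begin

lemma shi_cell_less_iff:
  assumes y: "y \<in> shi_cell n x" and ij: "i \<in> {1..n}" "j \<in> {1..n}"
  shows "y i < y j \<longleftrightarrow> x i < x j"
proof -
  have yc: "y \<in> shi_complement n" using y unfolding shi_cell_def by blast
  have eq: "y i = y j \<longleftrightarrow> x i = x j"
    using shi_complement_inj_on[OF yc] shi_complement_inj_on[OF x] ij by (metis inj_onD)
  have less: "y a < y b \<longleftrightarrow> x a < x b" if "a \<in> {1..n}" "b \<in> {1..n}" "a < b" for a b
    using y that unfolding shi_cell_def by auto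
  show ?thesis
  proof (cases i j rule: linorder_cases)
    case greater
    then have "y j < y i \<longleftrightarrow> x j < x i" using less ij by blast
    then show ?thesis using eq by auto
  qed (use less ij in auto)
qed

lemma shi_rank_less_iff:
  assumes "i \<in> {1..n}" "j \<in> {1..n}"
  shows "shi_rank n x i < shi_rank n x j \<longleftrightarrow> x j < x i"
proof -
  have less: "shi_rank n x i < shi_rank n x j" if "x j < x i" "i \<in> {1..n}" "j \<in> {1..n}" for i j
  proof -
    have "{k\<in>{1..n}. x i < x k} \<subset> {k\<in>{1..n}. x j < x k}" using that by auto
    then show ?thesis unfolding shi_rank_def by (simp add: psubset_card_mono)
  qed
  show ?thesis
    using less[of j i] less[of i j] assms shi_complement_inj_on[OF x]
    by (metis inj_onD less_asym linorder_neqE_linordered_idom)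
qed

lemma shi_rank_le_iff:
  assumes "i \<in> {1..n}" "j \<in> {1..n}"
  shows "shi_rank n x i \<le> shi_rank n x j \<longleftrightarrow> x j \<le> x i"
  using shi_rank_less_iff[OF assms(2,1)] by linarith

lemma bij_betw_shi_rank: "bij_betw (shi_rank n x) {1..n} {1..n}"
proof -
  have inj: "inj_on (shi_rank n x) {1..n}"
    using shi_rank_less_iff shi_complement_inj_on[OF x]
    by (intro inj_onI) (metis inj_onD less_irrefl linorder_neqE_linordered_idom)
  have "shi_rank n x i \<in> {1..n}" if "i \<in> {1..n}" for i
  proof -
    have "card {j\<in>{1..n}. x i < x j} \<le> card ({1..n} - {i})" by (rule card_mono) auto
    then show ?thesis using that unfolding shi_rank_def by auto
  qed
  then have "shi_rank n x ` {1..n} = {1..n}"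
    using card_image[OF inj] by (intro card_subset_eq) auto
  then show ?thesis using inj unfolding bij_betw_def by blast
qed

lemma shi_rank_in: "i \<in> {1..n} \<Longrightarrow> shi_rank n x i \<in> {1..n}"
  using bij_betw_shi_rank by (rule bij_betw_apply)

lemma shi_perm_cell:
  "shi_perm n (shi_cell n x) = (\<lambda>p. if p \<in> {1..n} then inv_into {1..n} (shi_rank n x) p else 0)"
  (is "_ = ?w")
  unfolding shi_perm_def
proof (rule the_equality)
  let ?inv = "inv_into {1..n} (shi_rank n x)"
  have inv: "?inv p \<in> {1..n}" "shi_rank n x (?inv p) = p" if "p \<in> {1..n}" for p
    using bij_betw_apply[OF bij_betw_inv_into[OF bij_betw_shi_rank] that]
      bij_betw_inv_into_right[OF bij_betw_shi_rank that] by auto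
  have "bij_betw ?w {1..n} {1..n}"
    using bij_betw_inv_into[OF bij_betw_shi_rank] by (rule bij_betw_cong[THEN iffD1, rotated]) simp
  moreover have "y (?w q) < y (?w p)" if y: "y \<in> shi_cell n x" and "1 \<le> p" "p < q" "q \<le> n"
    for y p q
  proof -
    have pq: "p \<in> {1..n}" "q \<in> {1..n}" "p < q" using that by auto
    then have "x (?inv q) < x (?inv p)" using shi_rank_less_iff[of "?inv p" "?inv q"] inv by auto
    then show ?thesis using shi_cell_less_iff[OF y, of "?inv q" "?inv p"] inv pq by auto
  qed
  ultimately show "bij_betw ?w {1..n} {1..n} \<and> (\<forall>p. p \<notin> {1..n} \<longrightarrow> ?w p = 0) \<and>
      (\<forall>y\<in>shi_cell n x. \<forall>p q. 1 \<le> p \<longrightarrow> p < q \<longrightarrow> q \<le> n \<longrightarrow> y (?w p) > y (?w q))"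
    by auto
next
  fix w assume w: "bij_betw w {1..n} {1..n} \<and> (\<forall>p. p \<notin> {1..n} \<longrightarrow> w p = 0) \<and>
      (\<forall>y\<in>shi_cell n x. \<forall>p q. 1 \<le> p \<longrightarrow> p < q \<longrightarrow> q \<le> n \<longrightarrow> y (w p) > y (w q))"
  \<comment> \<open>\<open>shi_rank n x \<circ> w\<close> is an increasing permutation of \<open>{1..n}\<close>, hence the identity\<close>
  have mono: "strict_mono_on {1..n} (shi_rank n x \<circ> w)"
  proof (rule strict_mono_onI)
    fix p q assume pq: "p \<in> {1..n}" "q \<in> {1..n}" "p < q"
    then have "x (w q) < x (w p)" using w self_in_shi_cell[OF x] by auto
    moreover have "w p \<in> {1..n}" "w q \<in> {1..n}"
      using w pq bij_betw_apply[of w "{1..n}" "{1..n}"] by auto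
    ultimately show "(shi_rank n x \<circ> w) p < (shi_rank n x \<circ> w) q"
      using shi_rank_less_iff by simp
  qed
  have bij: "bij_betw (shi_rank n x \<circ> w) {1..n} {1..n}"
    using w bij_betw_shi_rank by (blast intro: bij_betw_trans)
  have "strict_mono_on {1..n} id" by (simp add: strict_mono_on_def)
  then have "(shi_rank n x \<circ> w) p = id p" if "p \<in> {1..n}" for p
    by (intro strict_mono_on_bij_betw_eq[OF _ bij mono bij_betw_id _ that]) simp
  then have "w p = ?w p" for p
    using w bij_betw_inv_into_left[OF bij_betw_shi_rank, of "w p"] bij_betw_apply[of w "{1..n}" "{1..n}" p]
    by (cases "p \<in> {1..n}") auto
  then show "w = ?w" ..
qed

lemma shi_pos_cell:
  assumes i: "i \<in> {1..n}"
  shows "shi_pos n (shi_cell n x) i = shi_rank n x i"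
  unfolding shi_pos_def shi_perm_cell
proof (rule the_equality)
  show "shi_rank n x i \<in> {1..n} \<and>
      (if shi_rank n x i \<in> {1..n} then inv_into {1..n} (shi_rank n x) (shi_rank n x i) else 0) = i"
    using shi_rank_in[OF i] bij_betw_inv_into_left[OF bij_betw_shi_rank i] by simp
  fix p assume "p \<in> {1..n} \<and> (if p \<in> {1..n} then inv_into {1..n} (shi_rank n x) p else 0) = i"
  then show "p = shi_rank n x i" using bij_betw_inv_into_right[OF bij_betw_shi_rank] by auto
qed

lemma shi_arcs_cell: "shi_arcs n (shi_cell n x) = arcs_at n x"
  unfolding shi_arcs_def arcs_at_def using self_in_shi_cell[OF x] unfolding shi_cell_def by auto

end

lemma shi_cell_eqI:
  assumes "x1 \<in> shi_complement n" "x2 \<in> shi_complement n"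
    and "\<forall>i\<in>{1..n}. shi_rank n x1 i = shi_rank n x2 i" and "arcs_at n x1 = arcs_at n x2"
  shows "shi_cell n x1 = shi_cell n x2"
proof -
  have "(x1 i < x1 j \<longleftrightarrow> x2 i < x2 j) \<and> (1 < x1 i - x1 j \<longleftrightarrow> 1 < x2 i - x2 j)"
    if "1 \<le> i" "i < j" "j \<le> n" for i j
    using that assms shi_rank_less_iff[OF assms(1), of j i] shi_rank_less_iff[OF assms(2), of j i]
    unfolding arcs_at_def by (auto simp: set_eq_iff)
  then show ?thesis unfolding shi_cell_def by auto
qed

section \<open>The map sigma_n on a region\<close>

definition minimal_arcs :: "(nat \<Rightarrow> nat) \<Rightarrow> (nat \<times> nat) set \<Rightarrow> (nat \<times> nat) set" where
  "minimal_arcs pos A =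
    {(i, l)\<in>A. \<not> (\<exists>(j, k)\<in>A. (j, k) \<noteq> (i, l) \<and> pos i \<le> pos j \<and> pos k \<le> pos l)}"

definition position_arcs :: "(nat \<Rightarrow> nat) \<Rightarrow> (nat \<times> nat) set \<Rightarrow> (nat \<times> nat) set" where
  "position_arcs pos A = (\<lambda>(i, l). (pos i, pos l)) ` minimal_arcs pos A"

definition enclosing_arcs :: "nat \<Rightarrow> (nat \<Rightarrow> nat) \<Rightarrow> (nat \<times> nat) set \<Rightarrow> (nat \<times> nat) set" where
  "enclosing_arcs n pos N = {(i, j). 1 \<le> i \<and> i < j \<and> j \<le> n \<and> (\<exists>(a, b)\<in>N. pos i \<le> a \<and> b \<le> pos j)}"

lemma card_bij_betw_preimage:
  assumes "bij_betw \<pi> A B"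
  shows "card {a\<in>A. P (\<pi> a)} = card {b\<in>B. P b}"
proof -
  have "\<pi> ` {a\<in>A. P (\<pi> a)} = {b\<in>B. P b}"
  proof
    show "\<pi> ` {a\<in>A. P (\<pi> a)} \<subseteq> {b\<in>B. P b}" using bij_betw_apply[OF assms] by blast
    show "{b\<in>B. P b} \<subseteq> \<pi> ` {a\<in>A. P (\<pi> a)}"
      using bij_betw_imp_surj_on[OF assms] by blast
  qed
  then have "bij_betw \<pi> {a\<in>A. P (\<pi> a)} {b\<in>B. P b}"
    by (rule bij_betw_subset[OF assms, rotated]) blast
  then show ?thesis by (rule bij_betw_same_card)
qed

lemma minimal_arcs_subset: "minimal_arcs pos A \<subseteq> A"
  unfolding minimal_arcs_def by auto

lemma minimal_arcs_cong:
  assumes "\<And>i. i \<in> S \<Longrightarrow> f i = g i" and "\<And>i j. (i, j) \<in> A \<Longrightarrow> i \<in> S \<and> j \<in> S"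
  shows "minimal_arcs f A = minimal_arcs g A"
  unfolding minimal_arcs_def using assms by fastforce

lemma enclosing_arcs_cong:
  assumes "\<And>i. i \<in> {1..n} \<Longrightarrow> f i = g i"
  shows "enclosing_arcs n f N = enclosing_arcs n g N"
  unfolding enclosing_arcs_def using assms by fastforce

lemma rtrancl_map:
  assumes "\<And>x y. (x, y) \<in> r \<Longrightarrow> (f x, f y) \<in> s" and "(x, y) \<in> r\<^sup>*"
  shows "(f x, f y) \<in> s\<^sup>*"
  using assms(2) by (induction rule: rtrancl_induct) (auto dest: assms(1) intro: rtrancl_into_rtrancl)

locale ranked_arcs =
  fixes n :: nat and pos :: "nat \<Rightarrow> nat" and A :: "(nat \<times> nat) set"
  assumes bij_pos: "bij_betw pos {1..n} {1..n}"
    and arc_range: "(i, j) \<in> A \<Longrightarrow> 1 \<le> i \<and> i < j \<and> j \<le> n"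
    and arc_pos_less: "(i, j) \<in> A \<Longrightarrow> pos i < pos j"
begin

lemma pos_in: "i \<in> {1..n} \<Longrightarrow> pos i \<in> {1..n}"
  using bij_pos by (rule bij_betw_apply)

lemma pos_inj: "i \<in> {1..n} \<Longrightarrow> j \<in> {1..n} \<Longrightarrow> pos i = pos j \<Longrightarrow> i = j"
  using bij_pos by (auto simp: bij_betw_def dest: inj_onD)

lemma minimal_arc_in: "(i, j) \<in> minimal_arcs pos A \<Longrightarrow> i \<in> {1..n} \<and> j \<in> {1..n} \<and> i < j"
  using minimal_arcs_subset arc_range by fastforce

lemma minimal_arcs_pos_less:
  assumes a: "(i, l) \<in> minimal_arcs pos A" and b: "(j, k) \<in> minimal_arcs pos A"
    and ne: "(i, l) \<noteq> (j, k)" and le: "pos i \<le> pos j"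
  shows "pos i < pos j \<and> pos l < pos k"
proof -
  have "(i, l) \<in> A" "(j, k) \<in> A" using a b minimal_arcs_subset by blast+
  then have "pos l < pos k" using a ne le unfolding minimal_arcs_def by fastforce
  moreover have "pos i \<noteq> pos j"
    using b \<open>(i, l) \<in> A\<close> ne \<open>pos l < pos k\<close> unfolding minimal_arcs_def by force
  ultimately show ?thesis using le by simp
qed

lemma nonnesting_position_arcs: "nonnesting (position_arcs pos A)"
proof
  fix p q assume "(p, q) \<in> position_arcs pos A"
  then show "p < q" using minimal_arcs_subset arc_pos_less by (force simp: position_arcs_def)
next
  fix p q q' assume "(p, q) \<in> position_arcs pos A" "(p, q') \<in> position_arcs pos A"
  then obtain i l j k where "(i, l) \<in> minimal_arcs pos A" "(j, k) \<in> minimal_arcs pos A"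
    "p = pos i" "q = pos l" "p = pos j" "q' = pos k"
    unfolding position_arcs_def by auto
  note arcs = this
  show "q = q'"
  proof (cases "(i, l) = (j, k)")
    case False
    then show ?thesis using minimal_arcs_pos_less[OF arcs(1,2) False] arcs(3-) by simp
  qed (use arcs in simp)
next
  fix p q p' q' assume "(p, q) \<in> position_arcs pos A" "(p', q') \<in> position_arcs pos A" "p < p'"
  then obtain i l j k where "(i, l) \<in> minimal_arcs pos A" "(j, k) \<in> minimal_arcs pos A"
    "p = pos i" "q = pos l" "p' = pos j" "q' = pos k"
    unfolding position_arcs_def by auto
  moreover have "(i, l) \<noteq> (j, k)" using calculation \<open>p < p'\<close> by auto
  ultimately show "q < q'" using minimal_arcs_pos_less \<open>p < p'\<close> by auto
qed

lemma chains_position_arcs: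
  "chains {1..n} (position_arcs pos A) (chain_start {1..n} (position_arcs pos A))"
  using minimal_arc_in pos_in
  by (intro nonnesting.chains_chain_start[OF nonnesting_position_arcs]) (auto simp: position_arcs_def)

sublocale chains "{1..n}" "position_arcs pos A" "chain_start {1..n} (position_arcs pos A)"
  by (rule chains_position_arcs)

abbreviation "pos_inv \<equiv> inv_into {1..n} pos"

lemma pos_inv_pos: "i \<in> {1..n} \<Longrightarrow> pos_inv (pos i) = i"
  using bij_pos by (rule bij_betw_inv_into_left)

lemma position_arc_cases:
  assumes "(p, q) \<in> position_arcs pos A"
  obtains i j where "(i, j) \<in> minimal_arcs pos A" "p = pos i" "q = pos j"
    "pos_inv p = i" "pos_inv q = j" "i < j"
  using assms minimal_arc_in pos_inv_pos unfolding position_arcs_def by auto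

lemma minimal_component_iff_same_start:
  assumes i: "i \<in> {1..n}" and m: "m \<in> {1..n}"
  shows "(i, m) \<in> (minimal_arcs pos A \<union> (minimal_arcs pos A)\<inverse>)\<^sup>* \<longleftrightarrow>
    chain_start {1..n} (position_arcs pos A) (pos i) = chain_start {1..n} (position_arcs pos A) (pos m)"
proof -
  let ?K = "minimal_arcs pos A" and ?N = "position_arcs pos A"
  have "(i, m) \<in> (?K \<union> ?K\<inverse>)\<^sup>* \<longleftrightarrow> (pos i, pos m) \<in> (?N \<union> ?N\<inverse>)\<^sup>*"
  proof
    assume "(i, m) \<in> (?K \<union> ?K\<inverse>)\<^sup>*"
    then show "(pos i, pos m) \<in> (?N \<union> ?N\<inverse>)\<^sup>*"
      by (rule rtrancl_map[rotated]) (auto simp: position_arcs_def)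
  next
    assume "(pos i, pos m) \<in> (?N \<union> ?N\<inverse>)\<^sup>*"
    then have "(pos_inv (pos i), pos_inv (pos m)) \<in> (?K \<union> ?K\<inverse>)\<^sup>*"
      by (rule rtrancl_map[rotated]) (auto elim!: position_arc_cases)
    then show "(i, m) \<in> (?K \<union> ?K\<inverse>)\<^sup>*" by (simp only: pos_inv_pos[OF i] pos_inv_pos[OF m])
  qed
  then show ?thesis using component_iff_same_start pos_in i m by blast
qed

lemma Min_pos_component:
  assumes i: "i \<in> {1..n}"
  shows "Min (pos ` {m\<in>{1..n}. (i, m) \<in> (minimal_arcs pos A \<union> (minimal_arcs pos A)\<inverse>)\<^sup>*})
    = chain_start {1..n} (position_arcs pos A) (pos i)"
proof -
  let ?start = "chain_start {1..n} (position_arcs pos A)"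
  have "pos ` {m\<in>{1..n}. (i, m) \<in> (minimal_arcs pos A \<union> (minimal_arcs pos A)\<inverse>)\<^sup>*}
      = pos ` {m\<in>{1..n}. ?start (pos m) = ?start (pos i)}"
    using minimal_component_iff_same_start[OF i] by (metis (mono_tags, lifting))
  also have "\<dots> = {p\<in>{1..n}. ?start p = ?start (pos i)}"
  proof
    show "{p\<in>{1..n}. ?start p = ?start (pos i)} \<subseteq> pos ` {m\<in>{1..n}. ?start (pos m) = ?start (pos i)}"
    proof
      fix p assume p: "p \<in> {p\<in>{1..n}. ?start p = ?start (pos i)}"
      then have "p \<in> pos ` {1..n}" using bij_pos by (simp add: bij_betw_def)
      then show "p \<in> pos ` {m\<in>{1..n}. ?start (pos m) = ?start (pos i)}" using p by blast
    qed
  qed (use pos_in in auto)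
  also have "Min \<dots> = ?start (pos i)"
  proof (rule Min_eqI)
    show "?start (pos i) \<le> y" if "y \<in> {p\<in>{1..n}. ?start p = ?start (pos i)}" for y
      using that start_le[of y] by auto
    show "?start (pos i) \<in> {p\<in>{1..n}. ?start p = ?start (pos i)}"
      using start_in start_start pos_in[OF i] by auto
  qed simp
  finally show ?thesis .
qed

lemma less_if_same_start:
  assumes i: "i \<in> {1..n}" and j: "j \<in> {1..n}"
    and same: "chain_start {1..n} (position_arcs pos A) (pos i) = chain_start {1..n} (position_arcs pos A) (pos j)"
    and less: "pos i < pos j"
  shows "i < j"
proof -
  have mono: "(p, q) \<in> (position_arcs pos A)\<^sup>* \<Longrightarrow> pos_inv p \<le> pos_inv q" for p q
    by (induction rule: rtrancl_induct) (auto elim!: position_arc_cases)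
  have "i \<le> j"
    using mono[OF rtrancl_if_same_start[OF pos_in[OF i] pos_in[OF j] same]] less
    by (simp only: pos_inv_pos[OF i] pos_inv_pos[OF j] less_imp_le)
  then show ?thesis using less by (cases "i = j") auto
qed

lemma arcs_subset_enclosing: "A \<subseteq> enclosing_arcs n pos (position_arcs pos A)"
proof -
  have "(i, l) \<in> A \<longrightarrow> (\<exists>(a, b)\<in>position_arcs pos A. pos i \<le> a \<and> b \<le> pos l)" for i l
  proof (induction "pos l - pos i" arbitrary: i l rule: less_induct)
    case less
    show ?case
    proof
      assume il: "(i, l) \<in> A"
      show "\<exists>(a, b)\<in>position_arcs pos A. pos i \<le> a \<and> b \<le> pos l"
      proof (cases "(i, l) \<in> minimal_arcs pos A")
        case True
        then show ?thesis unfolding position_arcs_def by force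
      next
        case False
        \<comment> \<open>a non-minimal arc encloses a strictly shorter one\<close>
        then obtain j k where jk: "(j, k) \<in> A" "(j, k) \<noteq> (i, l)" "pos i \<le> pos j" "pos k \<le> pos l"
          using il unfolding minimal_arcs_def by blast
        have mem: "i \<in> {1..n}" "l \<in> {1..n}" "j \<in> {1..n}" "k \<in> {1..n}"
          using arc_range[OF jk(1)] arc_range[OF il] by auto
        have "pos j \<noteq> pos i \<or> pos k \<noteq> pos l"
          using pos_inj[OF mem(3) mem(1)] pos_inj[OF mem(4) mem(2)] jk(2) by blast
        then have "pos k - pos j < pos l - pos i" using jk arc_pos_less[OF jk(1)] arc_pos_less[OF il] by auto
        then show ?thesis using less jk by fastforce
      qed
    qed
  qed
  then show ?thesis unfolding enclosing_arcs_def using arc_range by fastforce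
qed

lemma bij_betw_start_fibre:
  "bij_betw pos {i\<in>{1..n}. chain_start {1..n} (position_arcs pos A) (pos i) = s}
    {p\<in>{1..n}. chain_start {1..n} (position_arcs pos A) p = s}"
proof -
  have "pos ` {i\<in>{1..n}. chain_start {1..n} (position_arcs pos A) (pos i) = s}
      = {p\<in>{1..n}. chain_start {1..n} (position_arcs pos A) p = s}"
  proof
    show "pos ` {i\<in>{1..n}. chain_start {1..n} (position_arcs pos A) (pos i) = s}
      \<subseteq> {p\<in>{1..n}. chain_start {1..n} (position_arcs pos A) p = s}"
      using pos_in by auto
    show "{p\<in>{1..n}. chain_start {1..n} (position_arcs pos A) p = s}
      \<subseteq> pos ` {i\<in>{1..n}. chain_start {1..n} (position_arcs pos A) (pos i) = s}"
    proof
      fix p assume p: "p \<in> {p\<in>{1..n}. chain_start {1..n} (position_arcs pos A) p = s}"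
      then obtain i where "i \<in> {1..n}" "p = pos i" using bij_betw_imp_surj_on[OF bij_pos] by blast
      then show "p \<in> pos ` {i\<in>{1..n}. chain_start {1..n} (position_arcs pos A) (pos i) = s}"
        using p by blast
    qed
  qed
  then show ?thesis by (rule bij_betw_subset[OF bij_pos, rotated]) auto
qed

lemma strict_mono_on_start_fibre:
  "strict_mono_on {i\<in>{1..n}. chain_start {1..n} (position_arcs pos A) (pos i) = s} pos"
proof (rule strict_mono_onI)
  fix i j
  assume i: "i \<in> {i\<in>{1..n}. chain_start {1..n} (position_arcs pos A) (pos i) = s}"
    and j: "j \<in> {i\<in>{1..n}. chain_start {1..n} (position_arcs pos A) (pos i) = s}" and "i < j"
  then have "pos i \<noteq> pos j" using pos_inj by blast
  moreover have "\<not> pos j < pos i" using less_if_same_start[of j i] i j \<open>i < j\<close> by auto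
  ultimately show "pos i < pos j" by simp
qed

end

definition rank_arcs :: "nat \<Rightarrow> (nat \<Rightarrow> real) \<Rightarrow> (nat \<times> nat) set" where
  "rank_arcs n x = position_arcs (shi_rank n x) (arcs_at n x)"

lemma ranked_arcs_cell:
  assumes "x \<in> shi_complement n"
  shows "ranked_arcs n (shi_rank n x) (arcs_at n x)"
proof
  show "bij_betw (shi_rank n x) {1..n} {1..n}" using assms by (rule bij_betw_shi_rank)
  fix i j assume "(i, j) \<in> arcs_at n x"
  then show "1 \<le> i \<and> i < j \<and> j \<le> n" "shi_rank n x i < shi_rank n x j"
    using shi_rank_less_iff[OF assms, of i j] by (auto simp: arcs_at_def)
qed

context
  fixes n :: nat and x :: "nat \<Rightarrow> real"
  assumes x: "x \<in> shi_complement n"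
begin

interpretation ranked_arcs n "shi_rank n x" "arcs_at n x"
  using x by (rule ranked_arcs_cell)

lemma shi_kept_cell: "shi_kept n (shi_cell n x) = minimal_arcs (shi_rank n x) (arcs_at n x)"
proof -
  have "shi_kept n (shi_cell n x) = minimal_arcs (shi_pos n (shi_cell n x)) (arcs_at n x)"
    unfolding shi_kept_def minimal_arcs_def shi_arcs_cell[OF x] ..
  also have "\<dots> = minimal_arcs (shi_rank n x) (arcs_at n x)"
    using shi_pos_cell[OF x] arc_range by (intro minimal_arcs_cong[of "{1..n}"]) fastforce+
  finally show ?thesis .
qed

lemma shi_sigma_cell:
  assumes i: "i \<in> {1..n}"
  shows "shi_sigma n (shi_cell n x) i = chain_start {1..n} (rank_arcs n x) (shi_rank n x i)"
proof -
  let ?K = "minimal_arcs (shi_rank n x) (arcs_at n x)"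
  have chain: "shi_chain n (shi_cell n x) i = {m\<in>{1..n}. (i, m) \<in> (?K \<union> ?K\<inverse>)\<^sup>*}"
    unfolding shi_chain_def shi_kept_cell ..
  have "shi_pos n (shi_cell n x) ` shi_chain n (shi_cell n x) i = shi_rank n x ` shi_chain n (shi_cell n x) i"
    unfolding chain using shi_pos_cell[OF x] by (intro image_cong) auto
  then show ?thesis
    using Min_pos_component[OF i] i unfolding shi_sigma_def chain rank_arcs_def by simp
qed

lemma arcs_at_eq_enclosing: "arcs_at n x = enclosing_arcs n (shi_rank n x) (rank_arcs n x)"
proof
  show "arcs_at n x \<subseteq> enclosing_arcs n (shi_rank n x) (rank_arcs n x)"
    unfolding rank_arcs_def by (rule arcs_subset_enclosing)
  show "enclosing_arcs n (shi_rank n x) (rank_arcs n x) \<subseteq> arcs_at n x"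
  proof
    fix e assume "e \<in> enclosing_arcs n (shi_rank n x) (rank_arcs n x)"
    then obtain i j a b where e: "e = (i, j)" "1 \<le> i" "i < j" "j \<le> n"
      and ab: "(a, b) \<in> rank_arcs n x" "shi_rank n x i \<le> a" "b \<le> shi_rank n x j"
      unfolding enclosing_arcs_def by auto
    then obtain i' j' where arc: "(i', j') \<in> minimal_arcs (shi_rank n x) (arcs_at n x)"
      "a = shi_rank n x i'" "b = shi_rank n x j'"
      unfolding rank_arcs_def position_arcs_def by auto
    then have "1 < x i' - x j'" "i' \<in> {1..n}" "j' \<in> {1..n}"
      using minimal_arcs_subset unfolding arcs_at_def by fastforce+
    moreover have "x i' \<le> x i" "x j \<le> x j'"
      using ab arc shi_rank_le_iff[OF x] e calculation(2,3) by auto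
    ultimately show "e \<in> arcs_at n x" using e unfolding arcs_at_def by auto
  qed
qed

lemma parking_function_shi_sigma: "parking_function n (shi_sigma n (shi_cell n x))"
proof -
  let ?f = "shi_sigma n (shi_cell n x)"
  have range: "1 \<le> ?f i \<and> ?f i \<le> n" if "i \<in> {1..n}" for i
    using shi_sigma_cell[OF that] start_in[OF pos_in[OF that]] unfolding rank_arcs_def by simp
  have count: "v \<le> card {i\<in>{1..n}. ?f i \<le> v}" if v: "v \<in> {1..n}" for v
  proof -
    have sub: "{i\<in>{1..n}. shi_rank n x i \<le> v} \<subseteq> {i\<in>{1..n}. ?f i \<le> v}"
    proof
      fix i assume i: "i \<in> {i\<in>{1..n}. shi_rank n x i \<le> v}"
      then have "?f i \<le> shi_rank n x i"
        using shi_sigma_cell start_le[OF pos_in] unfolding rank_arcs_def by simp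
      then show "i \<in> {i\<in>{1..n}. ?f i \<le> v}" using i by simp
    qed
    have "card {i\<in>{1..n}. shi_rank n x i \<le> v} = card {p\<in>{1..n}. p \<le> v}"
      by (rule card_bij_betw_preimage[OF bij_pos])
    also have "{p\<in>{1..n}. p \<le> v} = {1..v}" using v by auto
    finally have "card {i\<in>{1..n}. shi_rank n x i \<le> v} = v" by simp
    moreover have "card {i\<in>{1..n}. shi_rank n x i \<le> v} \<le> card {i\<in>{1..n}. ?f i \<le> v}"
      by (rule card_mono[OF _ sub]) simp
    ultimately show ?thesis by simp
  qed
  have "\<forall>i. i \<notin> {1..n} \<longrightarrow> ?f i = 0" by (simp add: shi_sigma_def)
  then show ?thesis unfolding parking_function_def using range count by blast
qed

end

lemma shi_cell_eq_if_shi_sigma_eq: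
  assumes x1: "x1 \<in> shi_complement n" and x2: "x2 \<in> shi_complement n"
    and eq: "shi_sigma n (shi_cell n x1) = shi_sigma n (shi_cell n x2)"
  shows "shi_cell n x1 = shi_cell n x2"
proof -
  interpret r1: ranked_arcs n "shi_rank n x1" "arcs_at n x1" using x1 by (rule ranked_arcs_cell)
  interpret r2: ranked_arcs n "shi_rank n x2" "arcs_at n x2" using x2 by (rule ranked_arcs_cell)
  let ?s1 = "chain_start {1..n} (rank_arcs n x1)" and ?s2 = "chain_start {1..n} (rank_arcs n x2)"
  have fibre: "{i\<in>{1..n}. ?s1 (shi_rank n x1 i) = v} = {i\<in>{1..n}. ?s2 (shi_rank n x2 i) = v}" for v
    using shi_sigma_cell[OF x1] shi_sigma_cell[OF x2] eq by auto
  have "card {p\<in>{1..n}. ?s1 p = v} = card {p\<in>{1..n}. ?s2 p = v}" for v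
    using card_bij_betw_preimage[OF r1.bij_pos, of "\<lambda>p. ?s1 p = v"]
      card_bij_betw_preimage[OF r2.bij_pos, of "\<lambda>p. ?s2 p = v"] fibre[of v] by simp
  then have arcs: "rank_arcs n x1 = rank_arcs n x2" and starts: "\<forall>p\<in>{1..n}. ?s1 p = ?s2 p"
    using chains_unique[OF r1.chains_position_arcs r2.chains_position_arcs]
    unfolding rank_arcs_def by auto
  have ranks: "shi_rank n x1 j = shi_rank n x2 j" if j: "j \<in> {1..n}" for j
  proof -
    \<comment> \<open>on the fibre of \<open>j\<close> both rankings are increasing bijections onto the same chain\<close>
    define s where "s = ?s1 (shi_rank n x1 j)"
    have bij1: "bij_betw (shi_rank n x1) {i\<in>{1..n}. ?s1 (shi_rank n x1 i) = s} {p\<in>{1..n}. ?s1 p = s}"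
      using r1.bij_betw_start_fibre[of s] unfolding rank_arcs_def .
    have mono1: "strict_mono_on {i\<in>{1..n}. ?s1 (shi_rank n x1 i) = s} (shi_rank n x1)"
      using r1.strict_mono_on_start_fibre[of s] unfolding rank_arcs_def .
    have "bij_betw (shi_rank n x2) {i\<in>{1..n}. ?s2 (shi_rank n x2 i) = s} {p\<in>{1..n}. ?s2 p = s}"
      using r2.bij_betw_start_fibre[of s] unfolding rank_arcs_def .
    moreover have "{p\<in>{1..n}. ?s2 p = s} = {p\<in>{1..n}. ?s1 p = s}" using starts by auto
    ultimately have bij2: "bij_betw (shi_rank n x2) {i\<in>{1..n}. ?s1 (shi_rank n x1 i) = s} {p\<in>{1..n}. ?s1 p = s}"
      unfolding fibre[of s, symmetric] by simp
    have mono2: "strict_mono_on {i\<in>{1..n}. ?s1 (shi_rank n x1 i) = s} (shi_rank n x2)"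
      unfolding fibre[of s] using r2.strict_mono_on_start_fibre[of s] unfolding rank_arcs_def .
    have "j \<in> {i\<in>{1..n}. ?s1 (shi_rank n x1 i) = s}" using j s_def by simp
    then show ?thesis by (rule strict_mono_on_bij_betw_eq[OF _ bij1 mono1 bij2 mono2, rotated]) simp
  qed
  have "arcs_at n x1 = arcs_at n x2"
    using arcs_at_eq_enclosing[OF x1] arcs_at_eq_enclosing[OF x2] enclosing_arcs_cong[OF ranks] arcs
    by simp
  then show ?thesis using shi_cell_eqI[OF x1 x2] ranks by blast
qed

section \<open>Surjectivity of sigma_n\<close>

lemma position_arcs_cong:
  assumes "\<And>i. i \<in> S \<Longrightarrow> f i = g i" and "\<And>i j. (i, j) \<in> A \<Longrightarrow> i \<in> S \<and> j \<in> S"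
  shows "position_arcs f A = position_arcs g A"
proof -
  have "(\<lambda>(i, l). (f i, f l)) ` minimal_arcs g A = (\<lambda>(i, l). (g i, g l)) ` minimal_arcs g A"
    using assms minimal_arcs_subset by (intro image_cong) fastforce+
  then show ?thesis
    unfolding position_arcs_def using minimal_arcs_cong[OF assms] by simp
qed

lemma position_arcs_enclosing_arcs:
  assumes bij: "bij_betw pos {1..n} {1..n}" and "chains {1..n} N start"
    and incr: "\<And>p q. (p, q) \<in> N \<Longrightarrow> inv_into {1..n} pos p < inv_into {1..n} pos q"
  shows "position_arcs pos (enclosing_arcs n pos N) = N"
proof -
  interpret chains "{1..n}" N start by fact
  let ?w = "inv_into {1..n} pos" and ?E = "enclosing_arcs n pos N"
  have w: "?w p \<in> {1..n}" "pos (?w p) = p" if "p \<in> {1..n}" for p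
    using bij_betw_apply[OF bij_betw_inv_into[OF bij] that] bij_betw_inv_into_right[OF bij that] by auto
  have pos_inj: "i = j" if "i \<in> {1..n}" "j \<in> {1..n}" "pos i = pos j" for i j
    using bij that by (auto simp: bij_betw_def dest: inj_onD)
  have arc_enclosed: "(?w p, ?w q) \<in> ?E" if pq: "(p, q) \<in> N" for p q
    using arc_in[OF pq] w incr[OF pq] pq unfolding enclosing_arcs_def by fastforce
  have no_enclosed: "p = a \<and> q = b" if "(p, q) \<in> N" "(a, b) \<in> N" "p \<le> a" "b \<le> q" for p q a b
    using that arc_mono[of p q a b] arc_right_unique[of p q b] by (cases "p < a") auto
  show ?thesis
  proof
    show "position_arcs pos ?E \<subseteq> N"
    proof
      fix e assume "e \<in> position_arcs pos ?E"
      then obtain i l where il: "(i, l) \<in> minimal_arcs pos ?E" "e = (pos i, pos l)"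
        unfolding position_arcs_def by auto
      then have "(i, l) \<in> ?E" using minimal_arcs_subset by blast
      then obtain a b where ab: "(a, b) \<in> N" "pos i \<le> a" "b \<le> pos l"
        unfolding enclosing_arcs_def by auto
      then have "pos (?w a) = a" "pos (?w b) = b" using w arc_in by auto
      then have "(?w a, ?w b) = (i, l)"
        using il(1) arc_enclosed[OF ab(1)] ab unfolding minimal_arcs_def by auto
      then show "e \<in> N" using il ab \<open>pos (?w a) = a\<close> \<open>pos (?w b) = b\<close> by auto
    qed
    show "N \<subseteq> position_arcs pos ?E"
    proof
      fix e assume e: "e \<in> N"
      then obtain p q where pq: "e = (p, q)" "(p, q) \<in> N" by (cases e) auto
      then have pn: "p \<in> {1..n}" "q \<in> {1..n}" using arc_in by auto
      have "\<not> (\<exists>(j, k)\<in>?E. (j, k) \<noteq> (?w p, ?w q) \<and> pos (?w p) \<le> pos j \<and> pos k \<le> pos (?w q))"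
      proof
        assume "\<exists>(j, k)\<in>?E. (j, k) \<noteq> (?w p, ?w q) \<and> pos (?w p) \<le> pos j \<and> pos k \<le> pos (?w q)"
        then obtain j k where jk: "(j, k) \<in> ?E" "(j, k) \<noteq> (?w p, ?w q)"
          "p \<le> pos j" "pos k \<le> q" using w pn by auto
        then obtain a b where ab: "(a, b) \<in> N" "pos j \<le> a" "b \<le> pos k"
          unfolding enclosing_arcs_def by auto
        then have "pos j = p" "pos k = q" using no_enclosed[OF pq(2) ab(1)] jk by auto
        moreover have "j \<in> {1..n}" "k \<in> {1..n}" using jk(1) unfolding enclosing_arcs_def by auto
        ultimately show False using jk(2) w pn pos_inj by metis
      qed
      then have "(?w p, ?w q) \<in> minimal_arcs pos ?E"
        using arc_enclosed[OF pq(2)] unfolding minimal_arcs_def by blast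
      then show "e \<in> position_arcs pos ?E"
        using pq w pn unfolding position_arcs_def by (auto intro!: image_eqI[of _ _ "(?w p, ?w q)"])
    qed
  qed
qed

definition threshold_points :: "nat \<Rightarrow> nat \<Rightarrow> (nat \<Rightarrow> nat) \<Rightarrow> (nat \<Rightarrow> real) \<Rightarrow> bool" where
  "threshold_points b n g y \<longleftrightarrow> (\<forall>p q. b \<le> p \<longrightarrow> 1 \<le> p \<longrightarrow> p < q \<longrightarrow> q \<le> n \<longrightarrow>
      y q < y p \<and> (1 < y p - y q \<longleftrightarrow> g p \<le> q) \<and> y p - y q \<noteq> 1)"

lemma threshold_points_step:
  assumes g: "\<forall>p\<in>{1..n}. p < g p \<and> g p \<le> n + 1"
    and g_mono: "\<forall>p q. 1 \<le> p \<longrightarrow> p \<le> q \<longrightarrow> q \<le> n \<longrightarrow> g p \<le> g q"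
    and y: "threshold_points (Suc a) n g y" and a: "1 \<le> a" "a < n"
  shows "\<exists>y'. threshold_points a n g y'"
proof -
  have ga: "a < g a" "g a \<le> n + 1" using g a by auto
  have y_prop: "y q < y p \<and> (1 < y p - y q \<longleftrightarrow> g p \<le> q) \<and> y p - y q \<noteq> 1"
    if "Suc a \<le> p" "p < q" "q \<le> n" for p q
    using y that unfolding threshold_points_def by auto
  have y_le: "y q \<le> y p" if "Suc a \<le> p" "p \<le> q" "q \<le> n" for p q
    using y_prop[of p q] that by (cases "p = q") auto
  \<comment> \<open>the new value \<open>y a\<close> must exceed \<open>y (Suc a)\<close>, exceed \<open>y (g a) + 1\<close> (if \<open>g a \<le> n\<close>) and stay
    below \<open>y (g a - 1) + 1\<close> (if \<open>Suc a < g a\<close>); take the midpoint of this interval\<close>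
  define lo where "lo = (if g a \<le> n then max (y (Suc a)) (1 + y (g a)) else y (Suc a))"
  define hi where "hi = (if Suc a < g a then 1 + y (g a - 1) else lo + 1)"
  have "lo < hi"
  proof (cases "Suc a < g a")
    case True
    have "y (Suc a) < 1 + y (g a - 1)"
    proof (cases "Suc a = g a - 1")
      case False
      then have "Suc a < g a - 1" using True by simp
      moreover have "g a \<le> g (Suc a)" using g_mono a by simp
      ultimately have "\<not> 1 < y (Suc a) - y (g a - 1)" "y (Suc a) - y (g a - 1) \<noteq> 1"
        using y_prop[of "Suc a" "g a - 1"] ga by auto
      then show ?thesis by linarith
    qed simp
    moreover have "1 + y (g a) < 1 + y (g a - 1)" if "g a \<le> n"
      using y_prop[of "g a - 1" "g a"] that True by simp
    ultimately show ?thesis using True unfolding lo_def hi_def by auto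
  qed (simp add: hi_def)
  define v where "v = (lo + hi) / 2"
  have v: "lo < v" "v < hi" using \<open>lo < hi\<close> unfolding v_def by auto
  have "threshold_points a n g (y(a := v))"
    unfolding threshold_points_def
  proof (intro allI impI)
    fix p q assume pq: "a \<le> p" "1 \<le> p" "p < q" "q \<le> n"
    show "(y(a := v)) q < (y(a := v)) p \<and> (1 < (y(a := v)) p - (y(a := v)) q \<longleftrightarrow> g p \<le> q) \<and>
        (y(a := v)) p - (y(a := v)) q \<noteq> 1"
    proof (cases "p = a")
      case False
      then show ?thesis using y_prop[of p q] pq by auto
    next
      case True
      have "y q \<le> y (Suc a)" using y_le[of "Suc a" q] pq True by simp
      moreover have "y (Suc a) \<le> lo" unfolding lo_def by auto
      ultimately have "y q < v" using v by simp
      moreover have "1 < v - y q" if "g a \<le> q"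
      proof -
        have "1 + y (g a) \<le> lo" "y q \<le> y (g a)"
          using y_le[of "g a" q] that pq ga unfolding lo_def by auto
        then show ?thesis using v by simp
      qed
      moreover have "v - y q < 1" if "\<not> g a \<le> q"
      proof -
        have "hi = 1 + y (g a - 1)" "y (g a - 1) \<le> y q"
          using y_le[of q "g a - 1"] that pq True ga unfolding hi_def by auto
        then show ?thesis using v by simp
      qed
      moreover have "(y(a := v)) q = y q" "(y(a := v)) p = v" using True pq by auto
      ultimately show ?thesis using True by (cases "g a \<le> q") auto
    qed
  qed
  then show ?thesis by blast
qed

lemma exists_threshold_points:
  assumes g: "\<forall>p\<in>{1..n}. p < g p \<and> g p \<le> n + 1"
    and g_mono: "\<forall>p q. 1 \<le> p \<longrightarrow> p \<le> q \<longrightarrow> q \<le> n \<longrightarrow> g p \<le> g q"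
  shows "\<exists>y. threshold_points 1 n g y"
proof -
  have "\<exists>y. threshold_points (n - k) n g y" for k
  proof (induction k)
    case 0
    have "threshold_points n n g (\<lambda>_. 0)" unfolding threshold_points_def by auto
    then show ?case by auto
  next
    case (Suc k)
    then obtain y where y: "threshold_points (n - k) n g y" by blast
    show ?case
    proof (cases "n - Suc k \<ge> 1")
      case True
      then have "Suc (n - Suc k) = n - k" "n - Suc k < n" by auto
      then show ?thesis using threshold_points_step[OF g g_mono, of "n - Suc k" y] y True by auto
    next
      case False
      then have "threshold_points (n - Suc k) n g y" using y unfolding threshold_points_def by auto
      then show ?thesis by blast
    qed
  qed
  from this[of "n - 1"] show ?thesis by (cases n) (auto simp: threshold_points_def)
qed

lemma exists_threshold_function:
  fixes n :: nat and N :: "(nat \<times> nat) set"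
  assumes less: "\<And>a b. (a, b) \<in> N \<Longrightarrow> a < b" and sub: "N \<subseteq> {1..n} \<times> {1..n}"
  shows "\<exists>g. (\<forall>p\<in>{1..n}. p < g p \<and> g p \<le> n + 1) \<and>
    (\<forall>p q. 1 \<le> p \<longrightarrow> p \<le> q \<longrightarrow> q \<le> n \<longrightarrow> g p \<le> g q) \<and>
    (\<forall>p q. q \<le> n \<longrightarrow> (g p \<le> q \<longleftrightarrow> (\<exists>(a, b)\<in>N. p \<le> a \<and> b \<le> q)))"
proof -
  define G where "G p = insert (n + 1) {b. \<exists>a. (a, b) \<in> N \<and> p \<le> a}" for p
  have fin: "finite (G p)" for p
  proof -
    have "{b. \<exists>a. (a, b) \<in> N \<and> p \<le> a} \<subseteq> {1..n}" using sub by auto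
    then have "finite {b. \<exists>a. (a, b) \<in> N \<and> p \<le> a}" by (rule finite_subset) simp
    then show ?thesis unfolding G_def by simp
  qed
  define g where "g p = Min (G p)" for p
  have g_in: "g p \<in> G p" for p unfolding g_def using fin by (rule Min_in) (simp add: G_def)
  have g_le: "g p \<le> b" if "b \<in> G p" for p b unfolding g_def using fin that by (rule Min_le)
  have above: "p < b" if b: "b \<in> G p" and p: "p \<in> {1..n}" for p b
  proof (cases "b = n + 1")
    case False
    then obtain a where "(a, b) \<in> N" "p \<le> a" using b unfolding G_def by auto
    then show ?thesis using less by (meson le_less_trans)
  qed (use p in simp)
  have "p < g p \<and> g p \<le> n + 1" if "p \<in> {1..n}" for p
    using above[OF g_in that] g_le[of "n + 1" p] unfolding G_def by simp
  moreover have "g p \<le> g q" if "p \<le> q" for p q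
  proof -
    have "G q \<subseteq> G p" using that unfolding G_def by auto
    then show ?thesis using g_in[of q] g_le[of "g q" p] by blast
  qed
  moreover have "g p \<le> q \<longleftrightarrow> (\<exists>(a, b)\<in>N. p \<le> a \<and> b \<le> q)" if "q \<le> n" for p q
  proof
    assume "g p \<le> q"
    then have "g p \<noteq> n + 1" using that by simp
    then show "\<exists>(a, b)\<in>N. p \<le> a \<and> b \<le> q" using g_in[of p] \<open>g p \<le> q\<close> unfolding G_def by auto
  next
    assume "\<exists>(a, b)\<in>N. p \<le> a \<and> b \<le> q"
    then obtain a b where "(a, b) \<in> N" "p \<le> a" "b \<le> q" by blast
    then have "g p \<le> b" using g_le[of b p] unfolding G_def by blast
    then show "g p \<le> q" using \<open>b \<le> q\<close> by simp
  qed
  ultimately show ?thesis by blast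
qed

lemma shi_rank_eqI:
  assumes bij: "bij_betw pos {1..n} {1..n}"
    and less: "\<And>i j. i \<in> {1..n} \<Longrightarrow> j \<in> {1..n} \<Longrightarrow> x i < x j \<longleftrightarrow> pos j < pos i"
    and i: "i \<in> {1..n}"
  shows "shi_rank n x i = pos i"
proof -
  have "{j\<in>{1..n}. x i < x j} = {j\<in>{1..n}. pos j < pos i}" using less[OF i] by auto
  then have "card {j\<in>{1..n}. x i < x j} = card {p\<in>{1..n}. p < pos i}"
    using card_bij_betw_preimage[OF bij] by simp
  also have "{p\<in>{1..n}. p < pos i} = {1..<pos i}" using bij_betw_apply[OF bij i] by auto
  finally show ?thesis using bij_betw_apply[OF bij i] unfolding shi_rank_def by simp
qed

lemma exists_point_realizing_arcs:
  fixes n :: nat and N :: "(nat \<times> nat) set"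
  assumes bij: "bij_betw pos {1..n} {1..n}"
    and less: "\<And>a b. (a, b) \<in> N \<Longrightarrow> a < b" and sub: "N \<subseteq> {1..n} \<times> {1..n}"
  shows "\<exists>x\<in>shi_complement n. (\<forall>i\<in>{1..n}. shi_rank n x i = pos i) \<and> arcs_at n x = enclosing_arcs n pos N"
proof -
  obtain g where g: "\<forall>p\<in>{1..n}. p < g p \<and> g p \<le> n + 1"
    "\<forall>p q. 1 \<le> p \<longrightarrow> p \<le> q \<longrightarrow> q \<le> n \<longrightarrow> g p \<le> g q"
    and g_arcs: "\<And>p q. q \<le> n \<Longrightarrow> g p \<le> q \<longleftrightarrow> (\<exists>(a, b)\<in>N. p \<le> a \<and> b \<le> q)"
    using exists_threshold_function[OF less sub] by blast
  obtain y where "threshold_points 1 n g y" using exists_threshold_points[OF g] by blast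
  then have y: "y q < y p \<and> (1 < y p - y q \<longleftrightarrow> g p \<le> q) \<and> y p - y q \<noteq> 1"
    if "1 \<le> p" "p < q" "q \<le> n" for p q
    using that unfolding threshold_points_def by auto
  define x where "x i = (if i \<in> {1..n} then y (pos i) else 0)" for i
  have pos: "pos i \<in> {1..n}" if "i \<in> {1..n}" for i using bij that by (rule bij_betw_apply)
  have pos_inj: "i = j" if "i \<in> {1..n}" "j \<in> {1..n}" "pos i = pos j" for i j
    using bij that by (auto simp: bij_betw_def dest: inj_onD)
  have x_less: "x i < x j \<longleftrightarrow> pos j < pos i" if "i \<in> {1..n}" "j \<in> {1..n}" for i j
    using y[of "pos i" "pos j"] y[of "pos j" "pos i"] pos[OF that(1)] pos[OF that(2)] that
    unfolding x_def by (cases "pos i" "pos j" rule: linorder_cases) auto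
  have x_gap: "(1 < x i - x j \<longleftrightarrow> (\<exists>(a, b)\<in>N. pos i \<le> a \<and> b \<le> pos j)) \<and> x i - x j \<noteq> 1"
    if "i \<in> {1..n}" "j \<in> {1..n}" for i j
  proof -
    have "pos j \<le> n" using pos[OF that(2)] by simp
    consider "pos i < pos j" | "pos j \<le> pos i" by linarith
    then show ?thesis
    proof cases
      case 1
      then show ?thesis
        using y[of "pos i" "pos j"] g_arcs[OF \<open>pos j \<le> n\<close>] pos that unfolding x_def by auto
    next
      case 2
      then have "x i \<le> x j" using x_less[OF that(2,1)] by (cases "pos i = pos j") auto
      moreover have "\<not> (\<exists>(a, b)\<in>N. pos i \<le> a \<and> b \<le> pos j)" using less 2 by fastforce
      ultimately show ?thesis by auto
    qed
  qed
  have "x i - x j \<noteq> 0 \<and> x i - x j \<noteq> 1" if "1 \<le> i" "i < j" "j \<le> n" for i j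
  proof -
    have ij: "i \<in> {1..n}" "j \<in> {1..n}" "i \<noteq> j" using that by auto
    then have "pos i \<noteq> pos j" using pos_inj by blast
    then have "x i \<noteq> x j" using x_less[OF ij(1,2)] x_less[OF ij(2,1)] by auto
    then show ?thesis using x_gap[OF ij(1,2)] by simp
  qed
  moreover have "x \<in> shi_space n" unfolding shi_space_def x_def by auto
  ultimately have x: "x \<in> shi_complement n" unfolding shi_complement_def by blast
  have "shi_rank n x i = pos i" if "i \<in> {1..n}" for i
    using shi_rank_eqI[OF bij x_less that] .
  moreover have "arcs_at n x = enclosing_arcs n pos N"
  proof (rule set_eqI)
    fix e show "e \<in> arcs_at n x \<longleftrightarrow> e \<in> enclosing_arcs n pos N"
    proof (cases e)
      case (Pair i j)
      then show ?thesis
        using x_gap[of i j] unfolding arcs_at_def enclosing_arcs_def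
        by (cases "1 \<le> i \<and> i < j \<and> j \<le> n") auto
    qed
  qed
  ultimately show ?thesis using x by blast
qed

lemma exists_positions_for_fibres:
  fixes f start :: "nat \<Rightarrow> nat"
  assumes f: "\<forall>i\<in>{1..n}. f i \<in> {1..n}" and start: "\<forall>p\<in>{1..n}. start p \<in> {1..n}"
    and fibres: "\<forall>v\<in>{1..n}. card {p\<in>{1..n}. start p = v} = card {i\<in>{1..n}. f i = v}"
  shows "\<exists>pos. bij_betw pos {1..n} {1..n} \<and> (\<forall>i\<in>{1..n}. start (pos i) = f i) \<and>
    (\<forall>i\<in>{1..n}. \<forall>j\<in>{1..n}. f i = f j \<longrightarrow> i < j \<longrightarrow> pos i < pos j)"
proof -
  define C where "C v = {i\<in>{1..n}. f i = v}" for v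
  define Q where "Q v = {p\<in>{1..n}. start p = v}" for v
  have "\<exists>h. bij_betw h (C v) (Q v) \<and> strict_mono_on (C v) h" for v
  proof (cases "v \<in> {1..n}")
    case True
    then show ?thesis using fibres unfolding C_def Q_def by (intro ex_strict_mono_on_bij_betw) auto
  next
    case False
    then have "C v = {}" "Q v = {}" using f start unfolding C_def Q_def by auto
    then show ?thesis by (auto simp: strict_mono_on_def)
  qed
  then obtain h where h: "\<And>v. bij_betw (h v) (C v) (Q v)" "\<And>v. strict_mono_on (C v) (h v)" by metis
  define pos where "pos i = h (f i) i" for i
  have pos_Q: "pos i \<in> Q (f i)" if "i \<in> {1..n}" for i
    using bij_betw_apply[OF h(1)] that unfolding pos_def C_def by auto
  have mono: "pos i < pos j" if "i \<in> {1..n}" "j \<in> {1..n}" "f i = f j" "i < j" for i j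
  proof -
    have "i \<in> C (f i)" "j \<in> C (f i)" using that unfolding C_def by auto
    then have "h (f i) i < h (f i) j" using strict_mono_onD[OF h(2)] \<open>i < j\<close> by blast
    then show ?thesis unfolding pos_def using \<open>f i = f j\<close> by simp
  qed
  have "inj_on pos {1..n}"
  proof (rule inj_onI)
    fix i j assume ij: "i \<in> {1..n}" "j \<in> {1..n}" "pos i = pos j"
    then have "f i = f j" using pos_Q[OF ij(1)] pos_Q[OF ij(2)] unfolding Q_def by auto
    then show "i = j" using mono[of i j] mono[of j i] ij by (cases i j rule: linorder_cases) auto
  qed
  moreover have "pos ` {1..n} = {1..n}"
  proof
    show "pos ` {1..n} \<subseteq> {1..n}" using pos_Q unfolding Q_def by auto
    show "{1..n} \<subseteq> pos ` {1..n}"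
    proof
      fix p assume "p \<in> {1..n}"
      then have "p \<in> h (start p) ` C (start p)" using bij_betw_imp_surj_on[OF h(1)] unfolding Q_def by blast
      then show "p \<in> pos ` {1..n}" unfolding pos_def C_def by force
    qed
  qed
  ultimately show ?thesis using pos_Q mono unfolding bij_betw_def Q_def by blast
qed

lemma exists_chains_for_parking_function:
  assumes f: "parking_function n f"
  shows "\<exists>N start. chains {1..n} N start \<and>
    (\<forall>v\<in>{1..n}. card {p\<in>{1..n}. start p = v} = card {i\<in>{1..n}. f i = v})"
proof -
  define m where "m v = card {i\<in>{1..n}. f i = v}" for v
  have f_in: "\<forall>i\<in>{1..n}. f i \<in> {1..n}" using f unfolding parking_function_def by auto
  have "\<forall>v\<in>{1..n}. card {u\<in>{1..n}. u \<le> v} \<le> (\<Sum>u\<in>{u\<in>{1..n}. u \<le> v}. m u)"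
  proof
    fix v assume v: "v \<in> {1..n}"
    have "card {i\<in>{1..n}. f i \<le> v} = (\<Sum>u\<in>{u\<in>{1..n}. u \<le> v}. card {i\<in>{i\<in>{1..n}. f i \<le> v}. f i = u})"
      by (rule card_eq_sum_card_fibres) (use f_in in auto)
    also have "\<dots> = (\<Sum>u\<in>{u\<in>{1..n}. u \<le> v}. m u)"
      unfolding m_def by (intro sum.cong refl arg_cong[where f = card]) auto
    moreover have "v \<le> card {i\<in>{1..n}. f i \<le> v}" using f v unfolding parking_function_def by blast
    moreover have "{u\<in>{1..n}. u \<le> v} = {1..v}" using v by auto
    ultimately show "card {u\<in>{1..n}. u \<le> v} \<le> (\<Sum>u\<in>{u\<in>{1..n}. u \<le> v}. m u)" by simp
  qed
  moreover have "(\<Sum>u\<in>{1..n}. m u) = card {1..n}"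
    unfolding m_def by (rule card_eq_sum_card_fibres[symmetric]) (use f_in in auto)
  ultimately show ?thesis using chains_exists[of "{1..n}" m] unfolding m_def by auto
qed

lemma shi_sigma_surj:
  assumes f: "parking_function n f"
  shows "\<exists>x\<in>shi_complement n. shi_sigma n (shi_cell n x) = f"
proof -
  have f_in: "\<forall>i\<in>{1..n}. f i \<in> {1..n}" using f unfolding parking_function_def by auto
  obtain N start where "chains {1..n} N start"
    and fibres: "\<forall>v\<in>{1..n}. card {p\<in>{1..n}. start p = v} = card {i\<in>{1..n}. f i = v}"
    using exists_chains_for_parking_function[OF f] by blast
  interpret chains "{1..n}" N start by fact
  obtain pos where bij: "bij_betw pos {1..n} {1..n}" and start_pos: "\<forall>i\<in>{1..n}. start (pos i) = f i"
    and mono: "\<forall>i\<in>{1..n}. \<forall>j\<in>{1..n}. f i = f j \<longrightarrow> i < j \<longrightarrow> pos i < pos j"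
    using exists_positions_for_fibres[OF f_in] start_in fibres by blast
  let ?w = "inv_into {1..n} pos"
  have w: "?w p \<in> {1..n}" "pos (?w p) = p" if "p \<in> {1..n}" for p
    using bij_betw_apply[OF bij_betw_inv_into[OF bij] that] bij_betw_inv_into_right[OF bij that] by auto
  \<comment> \<open>along a chain the labels increase, as \<open>pos\<close> is increasing on each fibre of \<open>f\<close>\<close>
  have incr: "?w p < ?w q" if pq: "(p, q) \<in> N" for p q
  proof -
    have pq_in: "p \<in> {1..n}" "q \<in> {1..n}" and "p < q" using arc_in[OF pq] arc_less[OF pq] by auto
    have "f (?w p) = f (?w q)" using start_pos w pq_in start_arc[OF pq] by metis
    then show ?thesis using mono w pq_in \<open>p < q\<close> by (metis linorder_neqE_nat less_asym)
  qed
  obtain x where x: "x \<in> shi_complement n" and rank: "\<forall>i\<in>{1..n}. shi_rank n x i = pos i"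
    and arcs: "arcs_at n x = enclosing_arcs n pos N"
    using exists_point_realizing_arcs[OF bij arc_less arcs_subset] by blast
  have "rank_arcs n x = position_arcs pos (enclosing_arcs n pos N)"
    unfolding rank_arcs_def arcs[symmetric]
    by (rule position_arcs_cong[of "{1..n}"]) (use rank in \<open>auto simp: arcs_at_def\<close>)
  also have "\<dots> = N"
    using position_arcs_enclosing_arcs[OF bij chains_axioms] incr by blast
  finally have N_eq: "rank_arcs n x = N" .
  have "shi_sigma n (shi_cell n x) i = f i" for i
  proof (cases "i \<in> {1..n}")
    case True
    have "shi_sigma n (shi_cell n x) i = chain_start {1..n} N (pos i)"
      using shi_sigma_cell[OF x True] rank True N_eq by simp
    also have "\<dots> = start (pos i)" using chain_start_eq bij_betw_apply[OF bij True] by blast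
    also have "\<dots> = f i" using start_pos True by blast
    finally show ?thesis .
  next
    case False
    then show ?thesis using f unfolding shi_sigma_def parking_function_def by auto
  qed
  then show ?thesis using x by blast
qed

lemma bij_betw_shi_sigma: "bij_betw (shi_sigma n) (shi_regions n) {f. parking_function n f}"
proof (rule bij_betw_imageI)
  show "inj_on (shi_sigma n) (shi_regions n)"
    using shi_cell_eq_if_shi_sigma_eq by (auto simp: shi_regions_eq intro!: inj_onI)
  show "shi_sigma n ` shi_regions n = {f. parking_function n f}"
  proof
    show "shi_sigma n ` shi_regions n \<subseteq> {f. parking_function n f}"
      using parking_function_shi_sigma by (auto simp: shi_regions_eq)
    show "{f. parking_function n f} \<subseteq> shi_sigma n ` shi_regions n"
    proof
      fix f assume "f \<in> {f. parking_function n f}"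
      then obtain x where "x \<in> shi_complement n" "shi_sigma n (shi_cell n x) = f"
        using shi_sigma_surj by blast
      then show "f \<in> shi_sigma n ` shi_regions n" unfolding shi_regions_eq by blast
    qed
  qed
qed

lemma shi_coset_eq:
  assumes "R \<in> shi_regions n"
  shows "shi_coset n R = zrel n `` {shi_sigma n R}"
proof -
  have "parking_function n (shi_sigma n R)"
    using assms parking_function_shi_sigma by (auto simp: shi_regions_eq)
  then have "shi_sigma n R i \<le> n" if "i \<in> {1..n}" for i
    using that unfolding parking_function_def by blast
  then have "(\<lambda>i. if i \<in> {1..n} then shi_sigma n R i mod (n + 1) else 0) = shi_sigma n R"
    by (auto intro!: ext simp: shi_sigma_def less_Suc_eq_le)
  then show ?thesis unfolding shi_coset_def by simp
qed

theorem corollary2p3: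
  fixes n :: nat
  assumes "n \<ge> 1"
  shows "bij_betw (shi_coset n) (shi_regions n) (zvec n // zrel n)
         \<and> card (shi_regions n) = (n + 1) ^ (n - 1)"
proof
  have "bij_betw ((\<lambda>f. zrel n `` {f}) \<circ> shi_sigma n) (shi_regions n) (zvec n // zrel n)"
    using bij_betw_shi_sigma bij_betw_parking_zrel_classes by (rule bij_betw_trans)
  then show bij: "bij_betw (shi_coset n) (shi_regions n) (zvec n // zrel n)"
    by (rule bij_betw_cong[THEN iffD1, rotated]) (simp add: shi_coset_eq)
  show "card (shi_regions n) = (n + 1) ^ (n - 1)"
    using bij_betw_same_card[OF bij] card_zvec_quotient[OF assms] by simp
qed

end
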